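(* Let $T>0$, $0<\alpha<1$, and let $c,d,\lambda>0$ be constants. Let $(p,q)$ solve \[ \begin{cases} \displaystyle p'(t)+c\,q(t)=d\int_0^t e_{\alpha,\alpha}(-\lambda(t-s)^\alpha)\,q(s)\,ds, \qquad q'(t)=p(t), \qquad t\in(0,T],\\[4pt] q(0)=u_0,\quad p(0)=u_1 . \end{cases} \] Assume $u_0=0$ and $c-d/\lambda\ge 0$. Then \[ p^2(t)+(c-d/\lambda)\,q^2(t)\le u_1^2\qquad \text{for all } t\in[0,T]. \]
   Context: The Mittag-Leffler function is $E_{\alpha,\beta}(z)=\sum_{k=0}^\infty \frac{z^k}{\Gamma(k\alpha+\beta)}$, and $e_{\alpha,\alpha}(-\lambda t^\alpha):=t^{\alpha-1}E_{\alpha,\alpha}(-\lambda t^\alpha)$ for $t>0$. *)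

theory Defs
  imports "HOL-Analysis.Analysis"
begin

definition mittag_leffler :: "real \<Rightarrow> real \<Rightarrow> real \<Rightarrow> real" where
  "mittag_leffler a b z = (\<Sum>k. z ^ k / Gamma (real k * a + b))"

text \<open>e_{a,a}(-lam t^a) := t^(a-1) E_{a,a}(-lam t^a), for t > 0.\<close>
definition ml_kernel :: "real \<Rightarrow> real \<Rightarrow> real \<Rightarrow> real" where
  "ml_kernel a lam t = t powr (a - 1) * mittag_leffler a a (- lam * t powr a)"

end

theory Submission
  imports Defs "HOL-Real_Asymp.Real_Asymp"
begin

text \<open>
  Write g_b(t) = t^(b-1)/Gamma(b) for the Riemann-Liouville kernel, K for the Mittag-Leffler
  kernel, * for convolution on [0,t], v = K * p and W = 1 * v. Since q = 1 * p, the equation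
  reads p' + c q = d W, so E = p^2 + c q^2 satisfies E' = 2 d p W. Term by term on the series
  K = sum_n (-lam)^n g_((n+1) a) one checks the resolvent identity g_(1-a) * K + lam (1 * K) = 1;
  hence Y = q - lam W = g_(1-a) * v and, since Y' = p - lam v,
    E(t) - E(0) = (d/lam) q(t)^2 - (d/lam) Y(t)^2 - 2 d int_0^t v Y.
  The last integral is nonnegative because g_b (0 < b < 1) is a positive definite kernel: it is
  a superposition of the exponentials exp(-r t) with weight r^(-b)/(Gamma(b) Gamma(1-b)), and
  int_0^t v (exp(-r .) * v) >= 0 for every r >= 0.
\<close>

lemma Gamma_plus1_pos: "y > 0 \<Longrightarrow> Gamma (y + 1) = y * Gamma (y::real)"
  by (rule Gamma_plus1) (auto simp: nonpos_Ints_def)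

lemma Gamma_log_convexity_bound:
  fixes y a :: real
  assumes y: "y > 0" and a: "0 < a" "a < 1"
  shows "y * Gamma y \<le> Gamma (y + a) * (y + a) powr (1 - a)"
proof -
  have cvx: "convex_on {0<..} (ln \<circ> Gamma :: real \<Rightarrow> real)" by (rule log_convex_Gamma_real)
  have "(ln \<circ> Gamma) ((1 - (1-a)) *\<^sub>R (y + a) + (1-a) *\<^sub>R (y + a + 1))
        \<le> (1 - (1-a)) * (ln \<circ> Gamma) (y + a) + (1-a) * (ln \<circ> Gamma) (y + a + 1)"
    by (rule convex_onD[OF cvx]) (use y a in auto)
  moreover have "(1 - (1-a)) *\<^sub>R (y + a) + (1-a) *\<^sub>R (y + a + 1) = y + 1"
    by (simp add: algebra_simps)
  ultimately have "ln (Gamma (y+1)) \<le> a * ln (Gamma (y+a)) + (1-a) * ln (Gamma (y+a+1))"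
    by simp
  also have "Gamma (y+a+1) = (y+a) * Gamma (y+a)" using y a by (intro Gamma_plus1_pos) auto
  also have "ln ((y+a) * Gamma (y+a)) = ln (y+a) + ln (Gamma (y+a))"
  proof -
    have "Gamma (y+a) > 0" "y + a > 0" using y a by auto
    thus ?thesis by (simp only: ln_mult_pos)
  qed
  finally have "ln (Gamma (y+1)) \<le> ln (Gamma (y+a)) + (1-a) * ln (y+a)"
    by (simp add: algebra_simps)
  also have "\<dots> = ln (Gamma (y + a) * (y + a) powr (1 - a))"
  proof -
    have "Gamma (y+a) > 0" "y + a > 0" "(y+a) powr (1-a) > 0" using y a by auto
    thus ?thesis by (simp only: ln_mult_pos ln_powr)
  qed
  finally have "ln (Gamma (y+1)) \<le> ln (Gamma (y + a) * (y + a) powr (1 - a))" .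
  hence "Gamma (y+1) \<le> Gamma (y + a) * (y + a) powr (1 - a)"
    using y a by (subst (asm) ln_le_cancel_iff) auto
  thus ?thesis using Gamma_plus1_pos[OF y] by simp
qed

text \<open>By the previous bound the ratio of consecutive terms is O(n^(-a)).\<close>

lemma summable_mittag_leffler_series:
  fixes a b x :: real
  assumes a: "0 < a" "a < 1" and b: "b > 0"
  shows "summable (\<lambda>n. x ^ n / Gamma (real n * a + b))"
proof -
  have lim: "(\<lambda>n. \<bar>x\<bar> * (real n * a + b + a) powr (1 - a) / (real n * a + b)) \<longlonglongrightarrow> 0"
    using a b by real_asymp
  then have "eventually (\<lambda>n. \<bar>x\<bar> * (real n * a + b + a) powr (1 - a) / (real n * a + b) < 1/2) sequentially"
    by (rule order_tendstoD) simp
  then obtain N where N: "\<And>n. n \<ge> N \<Longrightarrow> \<bar>x\<bar> * (real n * a + b + a) powr (1 - a) / (real n * a + b) < 1/2"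
    by (auto simp: eventually_sequentially)
  show ?thesis
  proof (rule summable_ratio_test[where c = "1/2" and N = N])
    show "norm (x ^ Suc n / Gamma (real (Suc n) * a + b)) \<le> 1/2 * norm (x ^ n / Gamma (real n * a + b))"
      if "n \<ge> N" for n
    proof -
      define y where "y = real n * a + b"
      have "real n * a \<ge> 0" using a by simp
      hence y: "y > 0" using b by (simp add: y_def)
      have g1: "Gamma (real n * a + b) = Gamma y" by (simp add: y_def algebra_simps)
      have g2: "Gamma (real (Suc n) * a + b) = Gamma (y + a)" by (simp add: y_def algebra_simps)
      have Gp: "Gamma y > 0" "Gamma (y + a) > 0" using y a by auto
      have key: "y * Gamma y \<le> Gamma (y + a) * (y + a) powr (1 - a)"
        by (rule Gamma_log_convexity_bound[OF y a])
      have "\<bar>x\<bar> * (y + a) powr (1 - a) / y < 1/2"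
        using N[OF that] by (simp add: y_def)
      hence "\<bar>x\<bar> * (y + a) powr (1 - a) * Gamma y < 1/2 * y * Gamma y"
        using y Gp by (simp add: field_simps)
      also have "1/2 * y * Gamma y \<le> 1/2 * (Gamma (y + a) * (y + a) powr (1 - a))"
        using key by simp
      finally have "\<bar>x\<bar> * Gamma y < 1/2 * Gamma (y + a)"
        using y a by (simp add: mult.commute mult.left_commute)
      hence "\<bar>x\<bar> * Gamma y \<le> 1/2 * Gamma (y + a)" by simp
      hence "\<bar>x\<bar>^n * (\<bar>x\<bar> * Gamma y) \<le> \<bar>x\<bar>^n * (1/2 * Gamma (y + a))"
        by (intro mult_left_mono) auto
      thus ?thesis using Gp unfolding g1 g2
        by (simp add: abs_mult power_abs field_simps)
    qed
  qed simp
qed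

lemma continuous_on_Icc_bounded:
  fixes f :: "real \<Rightarrow> real"
  assumes "continuous_on {a..b} f"
  obtains M where "M \<ge> 0" "\<And>x. x \<in> {a..b} \<Longrightarrow> \<bar>f x\<bar> \<le> M"
proof -
  have "compact (f ` {a..b})" by (rule compact_continuous_image[OF assms]) simp
  hence "bounded (f ` {a..b})" by (rule compact_imp_bounded)
  then obtain B where "\<forall>y\<in>f ` {a..b}. norm y \<le> B" by (auto simp: bounded_iff)
  hence "\<And>x. x \<in> {a..b} \<Longrightarrow> \<bar>f x\<bar> \<le> max B 0" by force
  thus ?thesis using that[of "max B 0"] by simp
qed

lemma continuous_on_clamp_Icc:
  fixes f :: "real \<Rightarrow> real"
  assumes "continuous_on {a..b} f"
  shows "continuous_on UNIV (\<lambda>x. f (clamp a b x))"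
  using assms by (intro clamp_continuous_on) simp

lemma has_real_derivative_at_interior:
  assumes "(f has_real_derivative f') (at x within {a..b})" "x \<in> {a<..<b}"
  shows "(f has_real_derivative f') (at x)"
proof -
  have "x \<in> interior {a..b}" using assms(2) by simp
  hence "at x within {a..b} = at x" by (rule at_within_interior)
  with assms(1) show ?thesis by simp
qed

lemma fundamental_theorem_of_calculus_real_interior:
  fixes f f' :: "real \<Rightarrow> real"
  assumes "a \<le> b" and "continuous_on {a..b} f"
    and "\<And>x. x \<in> {a<..<b} \<Longrightarrow> (f has_real_derivative f' x) (at x)"
  shows "f b = f a + integral {a..b} f'"
proof -
  have "(f' has_integral f b - f a) {a..b}"
    using assms by (intro fundamental_theorem_of_calculus_interior)
      (auto simp: has_real_derivative_iff_has_vector_derivative[symmetric])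
  thus ?thesis by (simp add: integral_unique)
qed

lemma lborel_integral_Icc_eq_integral:
  fixes h :: "real \<Rightarrow> real"
  assumes "continuous_on {a..b} h"
  shows "(LINT x|lborel. indicator {a..b} x * h x) = integral {a..b} h"
proof -
  have "set_integrable lborel {a..b} h"
    unfolding set_integrable_def by (rule borel_integrable_compact[OF _ assms]) simp
  from set_borel_integral_eq_integral(2)[OF this] show ?thesis
    by (simp add: set_lebesgue_integral_def)
qed

lemma nonneg_has_integral_lborel:
  fixes f :: "real \<Rightarrow> real"
  assumes [measurable]: "f \<in> borel_measurable borel" and S[measurable]: "S \<in> sets borel"
    and I: "(f has_integral I) S" and nn: "\<And>x. x \<in> S \<Longrightarrow> 0 \<le> f x"
  shows "integrable lborel (\<lambda>x. indicator S x * f x)" "(LINT x|lborel. indicator S x * f x) = I"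
proof -
  have ai: "f absolutely_integrable_on S"
    by (rule nonnegative_absolutely_integrable_1) (use I nn in auto)
  hence "integrable lebesgue (\<lambda>x. indicator S x *\<^sub>R f x)" by (simp add: set_integrable_def)
  moreover have m: "(\<lambda>x. indicator S x *\<^sub>R f x) \<in> borel_measurable lborel" by measurable
  ultimately show "integrable lborel (\<lambda>x. indicator S x * f x)"
    using integrable_completion[OF m] by simp
  have "(f has_integral (LINT x:S|lebesgue. f x)) S" by (rule has_integral_set_lebesgue[OF ai])
  hence "(LINT x:S|lebesgue. f x) = I" using I by (rule has_integral_unique)
  moreover have "(LINT x:S|lebesgue. f x) = (LINT x|lborel. indicator S x * f x)"
    unfolding set_lebesgue_integral_def using integral_completion[OF m] by simp
  ultimately show "(LINT x|lborel. indicator S x * f x) = I" by simp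
qed

lemma integrable_indicator_Icc_const: "integrable lborel (\<lambda>x::real. indicator {a..b} x * (C::real))"
  using borel_integrable_compact[of "{a..b}" "\<lambda>_. C"] by simp

lemma integrable_indicator_Icc_mono:
  fixes s T :: real
  assumes "integrable lborel (\<lambda>x. indicator {0..T} x * (B x :: real))" "s \<le> T"
  shows "integrable lborel (\<lambda>x. indicator {0..s} x * B x)"
proof -
  have "integrable lborel (\<lambda>x. indicator {0..s} x *\<^sub>R (indicator {0..T} x * B x))"
    by (rule integrable_mult_indicator) (use assms in auto)
  moreover have "(\<lambda>x. indicator {0..s} x *\<^sub>R (indicator {0..T} x * B x)) = (\<lambda>x. indicator {0..s} x * B x)"
    using assms(2) by (auto simp: fun_eq_iff split: split_indicator)
  ultimately show ?thesis by simp
qed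

lemma integrable_indicator_Icc_reflect:
  fixes s :: real
  assumes "integrable lborel (\<lambda>x. indicator {0..s} x * (B x :: real))"
  shows "integrable lborel (\<lambda>r. indicator {0..s} r * B (s - r))"
proof -
  have "integrable lborel (\<lambda>r. indicator {0..s} (s + (-1) * r) * B (s + (-1) * r))"
    by (rule lborel_integrable_real_affine[OF assms]) simp
  moreover have "(\<lambda>r. indicator {0..s} (s + (-1) * r) * B (s + (-1) * r)) = (\<lambda>r. indicator {0..s} r * B (s - r))"
    by (auto simp: fun_eq_iff split: split_indicator)
  ultimately show ?thesis by simp
qed

lemma integral_indicator_Icc_reflect:
  fixes s :: real
  shows "(LINT r|lborel. indicator {0..s} r * (B (s - r) :: real)) = (LINT x|lborel. indicator {0..s} x * B x)"
proof -
  have "(LINT x|lborel. indicator {0..s} x * B x) = \<bar>-1\<bar> *\<^sub>R (LINT r|lborel. indicator {0..s} (s + (-1) * r) * B (s + (-1) * r))"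
    by (rule lborel_integral_real_affine) simp
  also have "(\<lambda>r. indicator {0..s} (s + (-1) * r) * B (s + (-1) * r)) = (\<lambda>r. indicator {0..s} r * B (s - r))"
    by (auto simp: fun_eq_iff split: split_indicator)
  finally show ?thesis by simp
qed

lemma Fubini_integral_swap_dominated:
  fixes F G :: "real \<Rightarrow> real \<Rightarrow> real"
  assumes Fm[measurable]: "(\<lambda>(x, y). F x y) \<in> borel_measurable (lborel \<Otimes>\<^sub>M lborel)"
    and Gm[measurable]: "(\<lambda>(x, y). G x y) \<in> borel_measurable (lborel \<Otimes>\<^sub>M lborel)"
    and bnd: "\<And>x y. \<bar>F x y\<bar> \<le> G x y"
    and Gi: "AE x in lborel. integrable lborel (G x)"
    and GGi: "integrable lborel (\<lambda>x. LINT y|lborel. G x y)"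
  shows "(LINT x|lborel. LINT y|lborel. F x y) = (LINT y|lborel. LINT x|lborel. F x y)"
proof -
  have Fi: "AE x in lborel. integrable lborel (F x)"
    using Gi
  proof (rule AE_mp, intro AE_I2 impI)
    fix x assume "integrable lborel (G x)"
    thus "integrable lborel (F x)"
      by (rule Bochner_Integration.integrable_bound) (use bnd order_trans[OF _ abs_ge_self] in \<open>auto intro!: AE_I2\<close>)
  qed
  have "integrable (lborel \<Otimes>\<^sub>M lborel) (\<lambda>(x, y). F x y)"
  proof (rule lborel_pair.Fubini_integrable)
    show "integrable lborel (\<lambda>x. LINT y|lborel. norm ((\<lambda>(x, y). F x y) (x, y)))"
    proof (rule Bochner_Integration.integrable_bound[OF GGi])
      show "(\<lambda>x. LINT y|lborel. norm ((\<lambda>(x, y). F x y) (x, y))) \<in> borel_measurable lborel" by measurable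
      show "AE x in lborel. norm (LINT y|lborel. norm ((\<lambda>(x, y). F x y) (x, y))) \<le> norm (LINT y|lborel. G x y)"
        using Gi
      proof (rule AE_mp, intro AE_I2 impI)
        fix x assume gi: "integrable lborel (G x)"
        have G0: "\<And>y. G x y \<ge> 0" using bnd[of x] order_trans[OF abs_ge_zero] by blast
        have "(LINT y|lborel. \<bar>F x y\<bar>) \<le> (LINT y|lborel. G x y)"
        proof (rule Bochner_Integration.integral_mono[OF _ gi])
          show "integrable lborel (\<lambda>y. \<bar>F x y\<bar>)"
            by (rule Bochner_Integration.integrable_bound[OF gi]) (use bnd G0 in \<open>auto intro!: AE_I2\<close>)
        qed (rule bnd)
        moreover have "0 \<le> (LINT y|lborel. \<bar>F x y\<bar>)" by (rule integral_nonneg_AE) auto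
        ultimately show "norm (LINT y|lborel. norm ((\<lambda>(x, y). F x y) (x, y))) \<le> norm (LINT y|lborel. G x y)"
          by simp
      qed
    qed
    show "AE x in lborel. integrable lborel (\<lambda>y. (\<lambda>(x, y). F x y) (x, y))"
      using Fi by simp
  qed (rule Fm)
  thus ?thesis by (intro lborel_pair.Fubini_integral[symmetric]) simp
qed

section \<open>Convolution on [0,t]\<close>

definition causal_conv :: "(real \<Rightarrow> real) \<Rightarrow> (real \<Rightarrow> real) \<Rightarrow> real \<Rightarrow> real" where
  "causal_conv A B t = (LINT s|lborel. indicator {0..t} s * (A (t - s) * B s))"

lemma causal_conv_alt:
  fixes K f :: "real \<Rightarrow> real"
  shows "causal_conv K f t = (LINT u|lborel. indicator {0..t} u * (K u * f (t - u)))"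
  unfolding causal_conv_def using integral_indicator_Icc_reflect[of t "\<lambda>x. K (t - x) * f x"] by simp

lemma causal_conv_cong:
  assumes "\<And>s. s \<in> {0..\<tau>} \<Longrightarrow> f s = g s"
  shows "causal_conv A f \<tau> = causal_conv A g \<tau>"
  unfolding causal_conv_def by (intro Bochner_Integration.integral_cong refl) (use assms in \<open>auto split: split_indicator\<close>)

lemma causal_conv_cong_kernel:
  assumes "\<And>x. 0 < x \<Longrightarrow> x \<le> \<tau> \<Longrightarrow> A x = B x"
  shows "causal_conv A f \<tau> = causal_conv B f \<tau>"
  unfolding causal_conv_def
proof (rule integral_discrete_difference[where X = "{\<tau>}"])
  fix s assume "s \<notin> {\<tau>}"
  thus "indicator {0..\<tau>} s * (A (\<tau> - s) * f s) = indicator {0..\<tau>} s * (B (\<tau> - s) * f s)"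
    using assms[of "\<tau> - s"] by (auto split: split_indicator)
qed auto

lemma causal_conv_measurable [measurable]:
  assumes [measurable]: "A \<in> borel_measurable borel" "B \<in> borel_measurable borel"
  shows "causal_conv A B \<in> borel_measurable borel"
proof -
  have [measurable]: "A \<in> borel_measurable lborel" "B \<in> borel_measurable lborel" by simp_all
  have "(\<lambda>t. LINT s|lborel. (if 0 \<le> s \<and> s \<le> t then 1 else 0) * (A (t - s) * B s)) \<in> borel_measurable lborel"
    by measurable
  moreover have "causal_conv A B = (\<lambda>t. LINT s|lborel. (if 0 \<le> s \<and> s \<le> t then 1 else 0) * (A (t - s) * B s))"
    unfolding causal_conv_def by (intro ext Bochner_Integration.integral_cong refl) (auto split: split_indicator)
  ultimately show ?thesis by simp
qed

lemma integrable_causal_conv_bounded: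
  fixes X f :: "real \<Rightarrow> real"
  assumes [measurable]: "X \<in> borel_measurable borel" "f \<in> borel_measurable borel"
    and X: "\<And>x. x \<in> {0..\<tau>} \<Longrightarrow> \<bar>X x\<bar> \<le> M" and f: "\<And>x. x \<in> {0..\<tau>} \<Longrightarrow> \<bar>f x\<bar> \<le> C"
  shows "integrable lborel (\<lambda>s. indicator {0..\<tau>} s * (X (\<tau> - s) * f s))"
proof (rule Bochner_Integration.integrable_bound[OF integrable_indicator_Icc_const[of 0 \<tau> "M * C"]])
  show "(\<lambda>s. indicator {0..\<tau>} s * (X (\<tau> - s) * f s)) \<in> borel_measurable lborel" by measurable
  show "AE s in lborel. norm (indicator {0..\<tau>} s * (X (\<tau> - s) * f s)) \<le> norm (indicator {0..\<tau>} s * (M * C))"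
  proof (rule AE_I2)
    fix s
    show "norm (indicator {0..\<tau>} s * (X (\<tau> - s) * f s)) \<le> norm (indicator {0..\<tau>} s * (M * C))"
    proof (cases "s \<in> {0..\<tau>}")
      case True
      have "\<bar>X (\<tau> - s)\<bar> * \<bar>f s\<bar> \<le> M * C"
        using X[of "\<tau> - s"] f[of s] True by (intro mult_mono) auto
      moreover have "M \<ge> 0" "C \<ge> 0" using X[of "\<tau> - s"] f[of s] True by auto
      ultimately show ?thesis using True by (simp add: abs_mult)
    qed simp
  qed
qed

lemma causal_conv_diff_kernel:
  assumes "integrable lborel (\<lambda>s. indicator {0..\<tau>} s * (A (\<tau> - s) * f s))"
    and "integrable lborel (\<lambda>s. indicator {0..\<tau>} s * (B (\<tau> - s) * f s))"
  shows "causal_conv (\<lambda>x. A x - c * B x) f \<tau> = causal_conv A f \<tau> - c * causal_conv B f \<tau>"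
proof -
  have "causal_conv (\<lambda>x. A x - c * B x) f \<tau> = (LINT s|lborel. indicator {0..\<tau>} s * (A (\<tau> - s) * f s) - c * (indicator {0..\<tau>} s * (B (\<tau> - s) * f s)))"
    unfolding causal_conv_def by (intro Bochner_Integration.integral_cong refl) (simp add: algebra_simps)
  also have "\<dots> = causal_conv A f \<tau> - c * causal_conv B f \<tau>"
    unfolding causal_conv_def using assms by simp
  finally show ?thesis .
qed

lemma causal_conv_causal_conv_left:
  fixes A B f :: "real \<Rightarrow> real"
  shows "causal_conv A (causal_conv B f) \<tau> = (LINT s|lborel. LINT r|lborel.
    (if 0 \<le> r \<and> r \<le> s \<and> s \<le> \<tau> then A (\<tau> - s) * (B (s - r) * f r) else 0))"
  unfolding causal_conv_def
proof (rule Bochner_Integration.integral_cong[OF refl])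
  fix s
  show "indicator {0..\<tau>} s * (A (\<tau> - s) * (LINT r|lborel. indicator {0..s} r * (B (s - r) * f r)))
      = (LINT r|lborel. (if 0 \<le> r \<and> r \<le> s \<and> s \<le> \<tau> then A (\<tau> - s) * (B (s - r) * f r) else 0))"
  proof (cases "0 \<le> s \<and> s \<le> \<tau>")
    case True
    hence "indicator {0..\<tau>} s * (A (\<tau> - s) * (LINT r|lborel. indicator {0..s} r * (B (s - r) * f r)))
        = (LINT r|lborel. A (\<tau> - s) * (indicator {0..s} r * (B (s - r) * f r)))"
      by simp
    also have "\<dots> = (LINT r|lborel. (if 0 \<le> r \<and> r \<le> s \<and> s \<le> \<tau> then A (\<tau> - s) * (B (s - r) * f r) else 0))"
      using True by (intro Bochner_Integration.integral_cong) (auto split: split_indicator)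
    finally show ?thesis .
  next
    case False
    hence "(\<lambda>r. if 0 \<le> r \<and> r \<le> s \<and> s \<le> \<tau> then A (\<tau> - s) * (B (s - r) * f r) else 0) = (\<lambda>r. 0)"
      by auto
    thus ?thesis using False by simp
  qed
qed

lemma causal_conv_causal_conv_right:
  fixes A B f :: "real \<Rightarrow> real"
  shows "causal_conv (causal_conv A B) f \<tau> = (LINT r|lborel. LINT s|lborel.
    (if 0 \<le> r \<and> r \<le> s \<and> s \<le> \<tau> then A (\<tau> - s) * (B (s - r) * f r) else 0))"
  unfolding causal_conv_def
proof (rule Bochner_Integration.integral_cong[OF refl])
  fix r
  show "indicator {0..\<tau>} r * ((LINT u|lborel. indicator {0..\<tau> - r} u * (A (\<tau> - r - u) * B u)) * f r)
      = (LINT s|lborel. (if 0 \<le> r \<and> r \<le> s \<and> s \<le> \<tau> then A (\<tau> - s) * (B (s - r) * f r) else 0))"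
  proof (cases "0 \<le> r \<and> r \<le> \<tau>")
    case True
    have "(LINT u|lborel. indicator {0..\<tau> - r} u * (A (\<tau> - r - u) * B u))
        = \<bar>1\<bar> *\<^sub>R (LINT s|lborel. indicator {0..\<tau> - r} (-r + 1 * s)
            * (A (\<tau> - r - (-r + 1 * s)) * B (-r + 1 * s)))"
      by (rule lborel_integral_real_affine) simp
    also have "\<dots> = (LINT s|lborel. indicator {r..\<tau>} s * (A (\<tau> - s) * B (s - r)))"
      unfolding abs_one scaleR_one
      by (intro Bochner_Integration.integral_cong) (auto split: split_indicator)
    finally have shift: "(LINT u|lborel. indicator {0..\<tau> - r} u * (A (\<tau> - r - u) * B u))
        = (LINT s|lborel. indicator {r..\<tau>} s * (A (\<tau> - s) * B (s - r)))" .
    have "indicator {0..\<tau>} r * ((LINT u|lborel. indicator {0..\<tau> - r} u * (A (\<tau> - r - u) * B u)) * f r)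
        = (LINT s|lborel. indicator {r..\<tau>} s * (A (\<tau> - s) * B (s - r)) * f r)"
      using True by (simp add: shift)
    also have "\<dots> = (LINT s|lborel. (if 0 \<le> r \<and> r \<le> s \<and> s \<le> \<tau> then A (\<tau> - s) * (B (s - r) * f r) else 0))"
      using True by (intro Bochner_Integration.integral_cong) (auto split: split_indicator)
    finally show ?thesis .
  next
    case False
    hence "(\<lambda>s. if 0 \<le> r \<and> r \<le> s \<and> s \<le> \<tau> then A (\<tau> - s) * (B (s - r) * f r) else 0) = (\<lambda>s. 0)"
      by auto
    thus ?thesis using False by simp
  qed
qed

lemma causal_conv_assoc:
  fixes A B f :: "real \<Rightarrow> real"
  assumes [measurable]: "A \<in> borel_measurable borel" "B \<in> borel_measurable borel" "f \<in> borel_measurable borel"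
    and iA: "integrable lborel (\<lambda>x. indicator {0..T} x * A x)"
    and iB: "integrable lborel (\<lambda>x. indicator {0..T} x * B x)"
    and fb: "\<And>x. x \<in> {0..T} \<Longrightarrow> \<bar>f x\<bar> \<le> C"
    and \<tau>: "0 \<le> \<tau>" "\<tau> \<le> T"
  shows "causal_conv A (causal_conv B f) \<tau> = causal_conv (causal_conv A B) f \<tau>"
proof -
  define F where "F s r = (if 0 \<le> r \<and> r \<le> s \<and> s \<le> \<tau> then A (\<tau> - s) * (B (s - r) * f r) else 0)"
    for s r
  define G where "G s r = (if 0 \<le> r \<and> r \<le> s \<and> s \<le> \<tau> then C * (\<bar>A (\<tau> - s)\<bar> * \<bar>B (s - r)\<bar>) else 0)"
    for s r
  define nB where "nB = (LINT x|lborel. indicator {0..T} x * \<bar>B x\<bar>)"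
  have iBa: "integrable lborel (\<lambda>x. indicator {0..T} x * \<bar>B x\<bar>)"
    using integrable_abs[OF iB] by (simp add: abs_mult)
  have iAa: "integrable lborel (\<lambda>s. indicator {0..\<tau>} s * \<bar>A (\<tau> - s)\<bar>)"
    using integrable_abs[OF iA] \<tau>
    by (intro integrable_indicator_Icc_reflect integrable_indicator_Icc_mono[of T, OF _ \<open>\<tau> \<le> T\<close>])
      (simp add: abs_mult)
  have C0: "C \<ge> 0" using fb[of 0] \<tau> by auto
  have nB0: "nB \<ge> 0" unfolding nB_def by (rule integral_nonneg_AE) auto
  have [measurable]: "(\<lambda>(s, r). F s r) \<in> borel_measurable (lborel \<Otimes>\<^sub>M lborel)"
    "(\<lambda>(s, r). G s r) \<in> borel_measurable (lborel \<Otimes>\<^sub>M lborel)"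
    unfolding F_def G_def by measurable
  have bnd: "\<bar>F s r\<bar> \<le> G s r" for s r
  proof (cases "0 \<le> r \<and> r \<le> s \<and> s \<le> \<tau>")
    case True
    hence "\<bar>f r\<bar> \<le> C" using fb \<tau> by auto
    hence "\<bar>A (\<tau> - s)\<bar> * \<bar>B (s - r)\<bar> * \<bar>f r\<bar> \<le> \<bar>A (\<tau> - s)\<bar> * \<bar>B (s - r)\<bar> * C"
      by (intro mult_left_mono) auto
    thus ?thesis using True by (simp add: F_def G_def abs_mult mult_ac)
  qed (auto simp: F_def G_def)
  have G_eq: "G s = (\<lambda>r. C * \<bar>A (\<tau> - s)\<bar> * (indicator {0..s} r * \<bar>B (s - r)\<bar>))"
    and iBs: "integrable lborel (\<lambda>x. indicator {0..s} x * \<bar>B x\<bar>)"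
    if "0 \<le> s" "s \<le> \<tau>" for s
    using that \<tau> by (auto simp: G_def fun_eq_iff intro: integrable_indicator_Icc_mono[OF iBa]
        split: split_indicator)
  have G_zero: "G s = (\<lambda>r. 0)" if "\<not> (0 \<le> s \<and> s \<le> \<tau>)" for s
    using that by (auto simp: G_def fun_eq_iff)
  have G_int: "integrable lborel (G s)" for s
    by (cases "0 \<le> s \<and> s \<le> \<tau>")
      (auto simp: G_eq G_zero intro!: integrable_mult_right integrable_indicator_Icc_reflect iBs)
  have G_bound: "\<bar>LINT r|lborel. G s r\<bar> \<le> C * nB * (indicator {0..\<tau>} s * \<bar>A (\<tau> - s)\<bar>)" for s
  proof (cases "0 \<le> s \<and> s \<le> \<tau>")
    case True
    have "(LINT x|lborel. indicator {0..s} x * \<bar>B x\<bar>) \<le> nB"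
      unfolding nB_def using True \<tau>
      by (intro Bochner_Integration.integral_mono[OF iBs iBa]) (auto split: split_indicator)
    moreover have "0 \<le> (LINT x|lborel. indicator {0..s} x * \<bar>B x\<bar>)"
      by (rule integral_nonneg_AE) auto
    moreover have "C * \<bar>A (\<tau> - s)\<bar> * (LINT x|lborel. indicator {0..s} x * \<bar>B x\<bar>)
        \<le> C * \<bar>A (\<tau> - s)\<bar> * nB"
      using calculation C0 by (intro mult_left_mono) auto
    moreover have "(LINT r|lborel. G s r)
        = C * \<bar>A (\<tau> - s)\<bar> * (LINT x|lborel. indicator {0..s} x * \<bar>B x\<bar>)"
      using True by (simp add: G_eq integral_indicator_Icc_reflect[of s "\<lambda>x. \<bar>B x\<bar>"])
    ultimately show ?thesis using True C0 by (simp add: abs_mult mult_ac)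
  qed (simp add: G_zero)
  have GG_int: "integrable lborel (\<lambda>s. LINT r|lborel. G s r)"
    by (rule Bochner_Integration.integrable_bound[OF integrable_mult_right[OF iAa, of "C * nB"]])
      (use G_bound C0 nB0 in \<open>auto intro!: AE_I2 simp: abs_mult\<close>)
  have "(LINT s|lborel. LINT r|lborel. F s r) = (LINT r|lborel. LINT s|lborel. F s r)"
    by (rule Fubini_integral_swap_dominated) (use bnd G_int GG_int in auto)
  thus ?thesis
    unfolding causal_conv_causal_conv_left causal_conv_causal_conv_right F_def .
qed

lemma eventually_indicator_Icc_upper:
  fixes u :: "nat \<Rightarrow> real"
  assumes lim: "u \<longlonglongrightarrow> a" and xa: "x \<noteq> a"
  shows "eventually (\<lambda>n. indicator {0..u n} x = (indicator {0..a} x :: real)) sequentially"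
proof (cases "x < a")
  case True
  show ?thesis
  proof (cases "x < 0")
    case True
    thus ?thesis by (auto split: split_indicator)
  next
    case False
    have "eventually (\<lambda>n. u n > x) sequentially" by (rule order_tendstoD(1)[OF lim True])
    thus ?thesis by eventually_elim (use False True in \<open>auto split: split_indicator\<close>)
  qed
next
  case False
  hence "a < x" using xa by auto
  have "eventually (\<lambda>n. u n < x) sequentially" by (rule order_tendstoD(2)[OF lim \<open>a < x\<close>])
  thus ?thesis by eventually_elim (use \<open>a < x\<close> in \<open>auto split: split_indicator\<close>)
qed

lemma continuous_on_causal_conv:
  fixes K f :: "real \<Rightarrow> real"
  assumes [measurable]: "K \<in> borel_measurable borel"
    and iK: "integrable lborel (\<lambda>x. indicator {0..T} x * K x)"
    and cf: "continuous_on UNIV f"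
  shows "continuous_on {0..T} (causal_conv K f)"
proof (rule continuous_on_sequentiallyI)
  have fm[measurable]: "f \<in> borel_measurable borel" by (rule borel_measurable_continuous_onI[OF cf])
  obtain M where M: "M \<ge> 0" "\<And>x. x \<in> {0..T} \<Longrightarrow> \<bar>f x\<bar> \<le> M"
    using continuous_on_Icc_bounded[OF continuous_on_subset[OF cf]] by blast
  have iKa: "integrable lborel (\<lambda>x. indicator {0..T} x * \<bar>K x\<bar>)"
    using integrable_abs[OF iK] by (simp add: abs_mult)
  fix u :: "nat \<Rightarrow> real" and a
  assume u: "\<forall>n. u n \<in> {0..T}" and a: "a \<in> {0..T}" and lim: "u \<longlonglongrightarrow> a"
  show "(\<lambda>n. causal_conv K f (u n)) \<longlonglongrightarrow> causal_conv K f a"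
    unfolding causal_conv_alt
  proof (rule integral_dominated_convergence[where w = "\<lambda>x. M * (indicator {0..T} x * \<bar>K x\<bar>)"])
    show "integrable lborel (\<lambda>x. M * (indicator {0..T} x * \<bar>K x\<bar>))"
      by (intro integrable_mult_right iKa)
    show "(\<lambda>x. indicator {0..a} x * (K x * f (a - x))) \<in> borel_measurable lborel" by measurable
    show "\<And>n. (\<lambda>x. indicator {0..u n} x * (K x * f (u n - x))) \<in> borel_measurable lborel" by measurable
    show "AE x in lborel. norm (indicator {0..u n} x * (K x * f (u n - x))) \<le> M * (indicator {0..T} x * \<bar>K x\<bar>)" for n
    proof (rule AE_I2)
      fix x
      show "norm (indicator {0..u n} x * (K x * f (u n - x))) \<le> M * (indicator {0..T} x * \<bar>K x\<bar>)"
      proof (cases "x \<in> {0..u n}")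
        case True
        have "u n \<le> T" using u by auto
        hence "\<bar>f (u n - x)\<bar> \<le> M" using M(2)[of "u n - x"] True by auto
        hence "\<bar>K x\<bar> * \<bar>f (u n - x)\<bar> \<le> \<bar>K x\<bar> * M" by (intro mult_left_mono) auto
        thus ?thesis using True u[rule_format, of n] by (auto simp: abs_mult mult_ac split: split_indicator)
      qed (use M in \<open>auto split: split_indicator\<close>)
    qed
    show "AE x in lborel. (\<lambda>n. indicator {0..u n} x * (K x * f (u n - x))) \<longlonglongrightarrow> indicator {0..a} x * (K x * f (a - x))"
      using AE_lborel_singleton[of a]
    proof (rule AE_mp, intro AE_I2 impI)
      fix x :: real assume xa: "x \<noteq> a"
      have ev: "eventually (\<lambda>n. indicator {0..u n} x = (indicator {0..a} x :: real)) sequentially"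
        by (rule eventually_indicator_Icc_upper[OF lim xa])
      have fc: "(\<lambda>n. f (u n - x)) \<longlonglongrightarrow> f (a - x)"
        by (rule isCont_tendsto_compose[OF _ tendsto_diff[OF lim tendsto_const]])
           (use cf in \<open>simp add: continuous_on_eq_continuous_at\<close>)
      have "(\<lambda>n. indicator {0..a} x * (K x * f (u n - x))) \<longlonglongrightarrow> indicator {0..a} x * (K x * f (a - x))"
        by (intro tendsto_mult_left fc)
      moreover have "eventually (\<lambda>n. indicator {0..a} x * (K x * f (u n - x)) = indicator {0..u n} x * (K x * f (u n - x))) sequentially"
        using ev by eventually_elim simp
      ultimately show "(\<lambda>n. indicator {0..u n} x * (K x * f (u n - x))) \<longlonglongrightarrow> indicator {0..a} x * (K x * f (a - x))"
        by (rule Lim_transform_eventually)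
    qed
  qed
qed

definition heaviside :: "real \<Rightarrow> real" where
  "heaviside t = (if 0 \<le> t then 1 else 0)"

lemma heaviside_measurable [measurable]: "heaviside \<in> borel_measurable borel"
  unfolding heaviside_def by measurable

lemma integrable_heaviside: "integrable lborel (\<lambda>x. indicator {0..T} x * heaviside x)"
proof -
  have "(\<lambda>x. indicator {0..T} x * heaviside x) = (\<lambda>x. indicator {0..T} x * (1::real))"
    by (auto simp: fun_eq_iff heaviside_def split: split_indicator)
  thus ?thesis using integrable_indicator_Icc_const[of 0 T 1] by simp
qed

lemma causal_conv_heaviside: "causal_conv heaviside f \<tau> = (LINT s|lborel. indicator {0..\<tau>} s * f s)"
  unfolding causal_conv_def by (intro Bochner_Integration.integral_cong refl) (auto simp: heaviside_def split: split_indicator)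

lemma causal_conv_heaviside_integral:
  fixes f :: "real \<Rightarrow> real"
  assumes "continuous_on {0..\<tau>} f"
  shows "causal_conv heaviside f \<tau> = integral {0..\<tau>} f"
  unfolding causal_conv_heaviside by (rule lborel_integral_Icc_eq_integral[OF assms])

lemma causal_conv_heaviside_commute: "causal_conv K heaviside x = causal_conv heaviside K x"
  unfolding causal_conv_alt[of K heaviside] causal_conv_heaviside
  by (intro Bochner_Integration.integral_cong refl) (auto simp: heaviside_def split: split_indicator)

section \<open>Riemann-Liouville kernels\<close>

definition rl_kernel :: "real \<Rightarrow> real \<Rightarrow> real" where
  "rl_kernel b t = (if 0 < t then t powr (b - 1) / Gamma b else 0)"

lemma rl_kernel_measurable [measurable]: "rl_kernel b \<in> borel_measurable borel"
  unfolding rl_kernel_def by measurable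

lemma rl_kernel_nonneg: "b > 0 \<Longrightarrow> rl_kernel b t \<ge> 0"
  unfolding rl_kernel_def by auto

lemma rl_kernel_eq: "0 \<le> t \<Longrightarrow> rl_kernel b t = t powr (b - 1) / Gamma b"
  unfolding rl_kernel_def by auto

lemma rl_kernel_integral:
  assumes b: "b > 0" and x: "x \<ge> 0"
  shows "integrable lborel (\<lambda>s. indicator {0..x} s * rl_kernel b s)"
        "(LINT s|lborel. indicator {0..x} s * rl_kernel b s) = rl_kernel (b + 1) x"
proof -
  have "((\<lambda>s. s powr (b - 1)) has_integral (x powr (b - 1 + 1) / (b - 1 + 1))) {0..x}"
    by (rule has_integral_powr_from_0) (use b x in auto)
  hence "((\<lambda>s. s powr (b - 1) / Gamma b) has_integral (x powr b / b / Gamma b)) {0..x}"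
    using has_integral_mult_left[of _ _ _ "1 / Gamma b"] by (simp add: divide_inverse)
  moreover have "x powr b / b / Gamma b = rl_kernel (b + 1) x"
    using b x Gamma_plus1_pos[OF b] by (simp add: rl_kernel_def powr_eq_0_iff)
  ultimately have "((\<lambda>s. s powr (b - 1) / Gamma b) has_integral rl_kernel (b + 1) x) {0..x}" by simp
  hence hi: "(rl_kernel b has_integral rl_kernel (b + 1) x) {0..x}"
    by (rule has_integral_eq[rotated]) (simp add: rl_kernel_eq)
  show "integrable lborel (\<lambda>s. indicator {0..x} s * rl_kernel b s)"
       "(LINT s|lborel. indicator {0..x} s * rl_kernel b s) = rl_kernel (b + 1) x"
    by (rule nonneg_has_integral_lborel[OF rl_kernel_measurable _ hi], use b in \<open>auto intro: rl_kernel_nonneg\<close>)+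
qed

lemma has_integral_beta_convolution:
  fixes a b x :: real
  assumes a: "a > 0" and b: "b > 0" and x: "x > 0"
  shows "((\<lambda>s. (x - s) powr (a - 1) * s powr (b - 1)) has_integral x powr (a + b - 1) * Beta a b) {0..x}"
proof -
  have B: "((\<lambda>u. u powr (b - 1) * (1 - u) powr (a - 1)) has_integral Beta b a) (cbox 0 1)"
    using has_integral_Beta_real[OF b a] by simp
  have "((\<lambda>s. (\<lambda>u. u powr (b - 1) * (1 - u) powr (a - 1)) ((1/x) *\<^sub>R s + 0)) has_integral
          (Beta b a /\<^sub>R (1/x) ^ DIM(real))) (cbox ((0 - 0) /\<^sub>R (1/x)) ((1 - 0) /\<^sub>R (1/x)))"
    by (rule has_integral_affinity'[OF B]) (use x in simp)
  hence h: "((\<lambda>s. (s / x) powr (b - 1) * (1 - s / x) powr (a - 1)) has_integral (x * Beta a b)) {0..x}"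
    using x by (simp add: Beta_commute divide_inverse mult.commute)
  have "((\<lambda>s. x powr (a + b - 2) * ((s / x) powr (b - 1) * (1 - s / x) powr (a - 1))) has_integral
          x powr (a + b - 2) * (x * Beta a b)) {0..x}"
    by (rule has_integral_mult_right[OF h])
  moreover have "x powr (a + b - 2) * (x * Beta a b) = x powr (a + b - 1) * Beta a b"
  proof -
    have "x powr (a + b - 1) = x powr (a + b - 2) * x powr 1" by (simp only: powr_add[symmetric]) simp
    thus ?thesis using x by simp
  qed
  moreover have "x powr (a + b - 2) * ((s / x) powr (b - 1) * (1 - s / x) powr (a - 1)) = (x - s) powr (a - 1) * s powr (b - 1)"
    if "s \<in> {0..x}" for s
  proof -
    have s: "0 \<le> s" "s \<le> x" using that by auto
    have e1: "s powr (b - 1) = x powr (b - 1) * (s / x) powr (b - 1)"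
      using x s by (subst powr_mult[symmetric]) auto
    have e2: "(x - s) powr (a - 1) = x powr (a - 1) * (1 - s / x) powr (a - 1)"
    proof -
      have "x * (1 - s / x) = x - s" using x by (simp add: field_simps)
      thus ?thesis using x s by (subst powr_mult[symmetric]) auto
    qed
    have e3: "x powr (a + b - 2) = x powr (a - 1) * x powr (b - 1)"
      using x by (simp add: powr_add[symmetric])
    show ?thesis unfolding e1 e2 e3 by (simp add: mult_ac)
  qed
  ultimately show ?thesis
    by (metis (no_types, lifting) has_integral_eq)
qed

lemma causal_conv_rl_kernel:
  fixes a b x :: real
  assumes a: "a > 0" and b: "b > 0" and x: "x > 0"
  shows "integrable lborel (\<lambda>s. indicator {0..x} s * (rl_kernel a (x - s) * rl_kernel b s))"
        "causal_conv (rl_kernel a) (rl_kernel b) x = rl_kernel (a + b) x"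
proof -
  have "((\<lambda>s. (x - s) powr (a - 1) * s powr (b - 1) / (Gamma a * Gamma b)) has_integral
           x powr (a + b - 1) * Beta a b / (Gamma a * Gamma b)) {0..x}"
    using has_integral_mult_left[OF has_integral_beta_convolution[OF a b x], of "1 / (Gamma a * Gamma b)"]
    by (simp add: divide_inverse)
  moreover have "x powr (a + b - 1) * Beta a b / (Gamma a * Gamma b) = rl_kernel (a + b) x"
    using a b x by (auto simp: Beta_def rl_kernel_def Gamma_eq_zero_iff elim!: nonpos_Ints_cases)
  ultimately have "((\<lambda>s. (x - s) powr (a - 1) * s powr (b - 1) / (Gamma a * Gamma b)) has_integral rl_kernel (a + b) x) {0..x}"
    by simp
  hence hi: "((\<lambda>s. rl_kernel a (x - s) * rl_kernel b s) has_integral rl_kernel (a + b) x) {0..x}"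
    by (rule has_integral_eq[rotated]) (simp add: rl_kernel_eq)
  have m: "(\<lambda>s. rl_kernel a (x - s) * rl_kernel b s) \<in> borel_measurable borel" by measurable
  show "integrable lborel (\<lambda>s. indicator {0..x} s * (rl_kernel a (x - s) * rl_kernel b s))"
       "causal_conv (rl_kernel a) (rl_kernel b) x = rl_kernel (a + b) x"
    unfolding causal_conv_def
    by (rule nonneg_has_integral_lborel[OF m _ hi], use a b in \<open>auto intro!: mult_nonneg_nonneg rl_kernel_nonneg\<close>)+
qed

lemma causal_conv_heaviside_rl_kernel:
  assumes b: "b > 0" and x: "x > 0"
  shows "integrable lborel (\<lambda>s. indicator {0..x} s * (heaviside (x - s) * rl_kernel b s))"
        "causal_conv heaviside (rl_kernel b) x = rl_kernel (b + 1) x"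
proof -
  have eq: "(\<lambda>s. indicator {0..x} s * (heaviside (x - s) * rl_kernel b s)) = (\<lambda>s. indicator {0..x} s * rl_kernel b s)"
    by (auto simp: fun_eq_iff heaviside_def split: split_indicator)
  show "integrable lborel (\<lambda>s. indicator {0..x} s * (heaviside (x - s) * rl_kernel b s))"
    unfolding eq by (rule rl_kernel_integral(1)) (use b x in auto)
  show "causal_conv heaviside (rl_kernel b) x = rl_kernel (b + 1) x"
    unfolding causal_conv_def eq by (rule rl_kernel_integral(2)) (use b x in auto)
qed

section \<open>The Mittag-Leffler kernel as a resolvent\<close>

definition ml_partial :: "real \<Rightarrow> real \<Rightarrow> nat \<Rightarrow> real \<Rightarrow> real" where
  "ml_partial a lam N t = (\<Sum>n<N. (-lam) ^ n * rl_kernel (real n * a + a) t)"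

definition ml_causal :: "real \<Rightarrow> real \<Rightarrow> real \<Rightarrow> real" where
  "ml_causal a lam t = (if 0 < t then ml_kernel a lam t else 0)"

lemma ml_partial_measurable [measurable]: "ml_partial a lam N \<in> borel_measurable borel"
  unfolding ml_partial_def by measurable

lemma rl_kernel_ml_term:
  assumes t: "t > 0"
  shows "rl_kernel (real n * a + a) t = t powr (a - 1) * (t powr a) ^ n / Gamma (real n * a + a)"
proof -
  have "(t powr a) ^ n = t powr (a * real n)"
    using t by (simp add: powr_realpow[symmetric] powr_powr)
  moreover have "t powr (real n * a + a - 1) = t powr (a - 1) * t powr (a * real n)"
    by (simp add: powr_add[symmetric] algebra_simps)
  ultimately show ?thesis using t by (simp add: rl_kernel_def)
qed

lemma ml_partial_eq:
  assumes t: "t > 0"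
  shows "ml_partial a lam N t = t powr (a - 1) * (\<Sum>n<N. (-lam * t powr a) ^ n / Gamma (real n * a + a))"
  unfolding ml_partial_def sum_distrib_left
  by (intro sum.cong refl) (simp only: rl_kernel_ml_term[OF t] power_mult_distrib, simp add: algebra_simps)

context
  fixes a lam :: real
  assumes a: "0 < a" "a < 1" and lam: "lam > 0"
begin

lemma ml_partial_tendsto: "(\<lambda>N. ml_partial a lam N t) \<longlonglongrightarrow> ml_causal a lam t"
proof (cases "t > 0")
  case True
  have "(\<lambda>N. \<Sum>n<N. (-lam * t powr a) ^ n / Gamma (real n * a + a)) \<longlonglongrightarrow> mittag_leffler a a (-lam * t powr a)"
    unfolding mittag_leffler_def by (rule summable_LIMSEQ[OF summable_mittag_leffler_series[OF a a(1)]])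
  hence "(\<lambda>N. t powr (a - 1) * (\<Sum>n<N. (-lam * t powr a) ^ n / Gamma (real n * a + a)))
          \<longlonglongrightarrow> t powr (a - 1) * mittag_leffler a a (-lam * t powr a)"
    by (rule tendsto_mult_left)
  thus ?thesis using True by (simp add: ml_partial_eq ml_causal_def ml_kernel_def)
next
  case False
  hence "ml_partial a lam N t = 0" for N by (simp add: ml_partial_def rl_kernel_def)
  thus ?thesis using False by (simp add: ml_causal_def)
qed

lemma ml_causal_measurable [measurable]: "ml_causal a lam \<in> borel_measurable borel"
  by (rule borel_measurable_LIMSEQ_real[OF ml_partial_tendsto]) simp

definition ml_majorant :: "real \<Rightarrow> real" where
  "ml_majorant T = Gamma a * mittag_leffler a a (lam * T powr a)"

lemma ml_partial_bound:
  assumes t: "0 < t" "t \<le> T"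
  shows "\<bar>ml_partial a lam N t\<bar> \<le> ml_majorant T * rl_kernel a t"
proof -
  have sm: "summable (\<lambda>n. (lam * T powr a) ^ n / Gamma (real n * a + a))" by (rule summable_mittag_leffler_series[OF a a(1)])
  have "\<bar>\<Sum>n<N. (-lam * t powr a) ^ n / Gamma (real n * a + a)\<bar>
      \<le> (\<Sum>n<N. \<bar>(-lam * t powr a) ^ n / Gamma (real n * a + a)\<bar>)" by (rule sum_abs)
  also have "\<dots> \<le> (\<Sum>n<N. (lam * T powr a) ^ n / Gamma (real n * a + a))"
  proof (rule sum_mono)
    fix n
    have g: "Gamma (real n * a + a) > 0" using a by (intro Gamma_real_pos) (simp add: add_nonneg_pos)
    have "t powr a \<le> T powr a" using t a by (intro powr_mono2) auto
    hence "\<bar>-lam * t powr a\<bar> \<le> lam * T powr a" using lam t by (simp add: abs_mult)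
    hence "\<bar>-lam * t powr a\<bar> ^ n \<le> (lam * T powr a) ^ n" by (intro power_mono) auto
    thus "\<bar>(-lam * t powr a) ^ n / Gamma (real n * a + a)\<bar> \<le> (lam * T powr a) ^ n / Gamma (real n * a + a)"
      using g by (simp add: abs_div power_abs divide_right_mono)
  qed
  also have "\<dots> \<le> mittag_leffler a a (lam * T powr a)"
    unfolding mittag_leffler_def
  proof (rule sum_le_suminf[OF sm])
    fix n
    have g: "Gamma (real n * a + a) > 0" using a by (intro Gamma_real_pos) (simp add: add_nonneg_pos)
    show "0 \<le> (lam * T powr a) ^ n / Gamma (real n * a + a)" using g lam by simp
  qed simp
  finally have *: "\<bar>\<Sum>n<N. (-lam * t powr a) ^ n / Gamma (real n * a + a)\<bar> \<le> mittag_leffler a a (lam * T powr a)" .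
  have "\<bar>ml_partial a lam N t\<bar> = t powr (a - 1) * \<bar>\<Sum>n<N. (-lam * t powr a) ^ n / Gamma (real n * a + a)\<bar>"
    using t by (simp add: ml_partial_eq abs_mult)
  also have "\<dots> \<le> t powr (a - 1) * mittag_leffler a a (lam * T powr a)"
    by (intro mult_left_mono *) simp
  also have "\<dots> = ml_majorant T * rl_kernel a t"
  proof -
    have ga: "Gamma a \<noteq> 0" using a Gamma_real_pos[of a] by linarith
    show ?thesis using t by (simp add: ml_majorant_def rl_kernel_def ga)
  qed
  finally show ?thesis .
qed

lemma ml_causal_bound:
  assumes t: "0 < t" "t \<le> T"
  shows "\<bar>ml_causal a lam t\<bar> \<le> ml_majorant T * rl_kernel a t"
proof (rule tendsto_le[OF sequentially_bot tendsto_const])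
  show "(\<lambda>N. \<bar>ml_partial a lam N t\<bar>) \<longlonglongrightarrow> \<bar>ml_causal a lam t\<bar>" by (intro tendsto_rabs ml_partial_tendsto)
  show "eventually (\<lambda>N. \<bar>ml_partial a lam N t\<bar> \<le> ml_majorant T * rl_kernel a t) sequentially"
    using ml_partial_bound[OF t] by simp
qed

lemma ml_majorant_nonneg:
  assumes T: "T \<ge> 0"
  shows "ml_majorant T \<ge> 0"
  unfolding ml_majorant_def mittag_leffler_def using a lam T
  by (intro mult_nonneg_nonneg suminf_nonneg summable_mittag_leffler_series)
    (auto intro!: divide_nonneg_pos Gamma_real_pos add_nonneg_pos)

lemma ml_partial_nonpos: "t \<le> 0 \<Longrightarrow> ml_partial a lam N t = 0"
  by (simp add: ml_partial_def rl_kernel_def)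

lemma ml_causal_integrable:
  assumes T: "T \<ge> 0"
  shows "integrable lborel (\<lambda>x. indicator {0..T} x * ml_causal a lam x)"
proof (rule Bochner_Integration.integrable_bound)
  show "integrable lborel (\<lambda>x. ml_majorant T * (indicator {0..T} x * rl_kernel a x))"
    by (intro integrable_mult_right rl_kernel_integral(1) a T)
  show "(\<lambda>x. indicator {0..T} x * ml_causal a lam x) \<in> borel_measurable lborel" by measurable
  show "AE x in lborel. norm (indicator {0..T} x * ml_causal a lam x) \<le> norm (ml_majorant T * (indicator {0..T} x * rl_kernel a x))"
  proof (rule AE_I2)
    fix x
    show "norm (indicator {0..T} x * ml_causal a lam x) \<le> norm (ml_majorant T * (indicator {0..T} x * rl_kernel a x))"
    proof (cases "0 < x \<and> x \<le> T")
      case True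
      thus ?thesis using ml_causal_bound[of x T] ml_majorant_nonneg[OF T] rl_kernel_nonneg[of a x] a
        by (simp add: abs_mult)
    qed (auto simp: ml_causal_def split: split_indicator)
  qed
qed

lemma causal_conv_ml_partial:
  assumes K: "\<And>n. integrable lborel (\<lambda>s. indicator {0..x} s * (K (x - s) * rl_kernel (real n * a + a) s))"
  shows "causal_conv K (ml_partial a lam N) x = (\<Sum>n<N. (-lam) ^ n * causal_conv K (rl_kernel (real n * a + a)) x)"
proof -
  have "causal_conv K (ml_partial a lam N) x = (LINT s|lborel. (\<Sum>n<N. (-lam) ^ n * (indicator {0..x} s * (K (x - s) * rl_kernel (real n * a + a) s))))"
    unfolding causal_conv_def ml_partial_def
    by (intro Bochner_Integration.integral_cong refl) (simp add: sum_distrib_left mult_ac)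
  also have "\<dots> = (\<Sum>n<N. (LINT s|lborel. (-lam) ^ n * (indicator {0..x} s * (K (x - s) * rl_kernel (real n * a + a) s))))"
    by (rule Bochner_Integration.integral_sum) (intro integrable_mult_right K)
  also have "\<dots> = (\<Sum>n<N. (-lam) ^ n * causal_conv K (rl_kernel (real n * a + a)) x)"
    unfolding causal_conv_def by simp
  finally show ?thesis .
qed

lemma causal_conv_ml_partial_tendsto:
  assumes x: "x > 0" and K[measurable]: "K \<in> borel_measurable borel"
    and Kint: "integrable lborel (\<lambda>s. indicator {0..x} s * (\<bar>K (x - s)\<bar> * rl_kernel a s))"
  shows "(\<lambda>N. causal_conv K (ml_partial a lam N) x) \<longlonglongrightarrow> causal_conv K (ml_causal a lam) x"
  unfolding causal_conv_def
proof (rule integral_dominated_convergence[where w = "\<lambda>s. ml_majorant x * (indicator {0..x} s * (\<bar>K (x - s)\<bar> * rl_kernel a s))"])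
  show "integrable lborel (\<lambda>s. ml_majorant x * (indicator {0..x} s * (\<bar>K (x - s)\<bar> * rl_kernel a s)))"
    by (intro integrable_mult_right Kint)
  show "(\<lambda>s. indicator {0..x} s * (K (x - s) * ml_causal a lam s)) \<in> borel_measurable lborel" by measurable
  show "\<And>N. (\<lambda>s. indicator {0..x} s * (K (x - s) * ml_partial a lam N s)) \<in> borel_measurable lborel" by measurable
  show "AE s in lborel. (\<lambda>N. indicator {0..x} s * (K (x - s) * ml_partial a lam N s)) \<longlonglongrightarrow> indicator {0..x} s * (K (x - s) * ml_causal a lam s)"
    by (intro AE_I2 tendsto_mult_left ml_partial_tendsto)
  show "AE s in lborel. norm (indicator {0..x} s * (K (x - s) * ml_partial a lam N s)) \<le> ml_majorant x * (indicator {0..x} s * (\<bar>K (x - s)\<bar> * rl_kernel a s))" for N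
  proof (rule AE_I2)
    fix s
    show "norm (indicator {0..x} s * (K (x - s) * ml_partial a lam N s)) \<le> ml_majorant x * (indicator {0..x} s * (\<bar>K (x - s)\<bar> * rl_kernel a s))"
    proof (cases "0 < s \<and> s \<le> x")
      case True
      have "\<bar>K (x - s)\<bar> * \<bar>ml_partial a lam N s\<bar> \<le> \<bar>K (x - s)\<bar> * (ml_majorant x * rl_kernel a s)"
        by (intro mult_left_mono ml_partial_bound) (use True in auto)
      thus ?thesis using True by (simp add: abs_mult mult_ac)
    next
      case False
      have "0 \<le> ml_majorant x * (indicator {0..x} s * (\<bar>K (x - s)\<bar> * rl_kernel a s))"
        using ml_majorant_nonneg[of x] x rl_kernel_nonneg[of a s] a by (intro mult_nonneg_nonneg) auto
      moreover have "indicator {0..x} s * (K (x - s) * ml_partial a lam N s) = 0"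
        using False by (cases "s \<le> 0") (auto simp: ml_partial_nonpos split: split_indicator)
      ultimately show ?thesis by (metis norm_zero)
    qed
  qed
qed

lemma causal_conv_rl_kernel_ml_partial:
  assumes x: "x > 0"
  shows "causal_conv (rl_kernel (1 - a)) (ml_partial a lam N) x
    = (\<Sum>n<N. (-lam) ^ n * rl_kernel (real n * a + 1) x)"
proof -
  have b1: "1 - a > 0" and pos: "real n * a + a > 0" for n
    using a by (simp_all add: add_nonneg_pos)
  have "causal_conv (rl_kernel (1 - a)) (ml_partial a lam N) x
      = (\<Sum>n<N. (-lam) ^ n * causal_conv (rl_kernel (1 - a)) (rl_kernel (real n * a + a)) x)"
    by (rule causal_conv_ml_partial) (rule causal_conv_rl_kernel(1)[OF b1 pos x])
  also have "\<dots> = (\<Sum>n<N. (-lam) ^ n * rl_kernel (1 - a + (real n * a + a)) x)"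
    by (simp add: causal_conv_rl_kernel(2)[OF b1 pos x])
  finally show ?thesis by (simp add: add.commute)
qed

lemma causal_conv_heaviside_ml_partial:
  assumes x: "x > 0"
  shows "causal_conv heaviside (ml_partial a lam N) x
    = (\<Sum>n<N. (-lam) ^ n * rl_kernel (real n * a + a + 1) x)"
proof -
  have pos: "real n * a + a > 0" for n using a by (simp add: add_nonneg_pos)
  have "causal_conv heaviside (ml_partial a lam N) x
      = (\<Sum>n<N. (-lam) ^ n * causal_conv heaviside (rl_kernel (real n * a + a)) x)"
    by (rule causal_conv_ml_partial) (rule causal_conv_heaviside_rl_kernel(1)[OF pos x])
  thus ?thesis by (simp add: causal_conv_heaviside_rl_kernel(2)[OF pos x])
qed

lemma ml_partial_resolvent:
  assumes x: "x > 0"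
  shows "causal_conv (rl_kernel (1 - a)) (ml_partial a lam N) x
    + lam * causal_conv heaviside (ml_partial a lam N) x = 1 - (-lam) ^ N * rl_kernel (real N * a + 1) x"
proof -
  define c where "c n = (-lam) ^ n * rl_kernel (real n * a + 1) x" for n
  have "causal_conv (rl_kernel (1 - a)) (ml_partial a lam N) x
      + lam * causal_conv heaviside (ml_partial a lam N) x = (\<Sum>n<N. c n - c (Suc n))"
    unfolding causal_conv_rl_kernel_ml_partial[OF x] causal_conv_heaviside_ml_partial[OF x]
      sum_distrib_left sum.distrib[symmetric]
    by (intro sum.cong refl) (simp add: c_def algebra_simps)
  also have "\<dots> = c 0 - c N" by (rule sum_lessThan_telescope')
  also have "c 0 = 1" using x by (simp add: c_def rl_kernel_def)
  finally show ?thesis by (simp add: c_def)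
qed

lemma ml_partial_remainder_tendsto:
  assumes x: "x > 0"
  shows "(\<lambda>N. (-lam) ^ N * rl_kernel (real N * a + 1) x) \<longlonglongrightarrow> 0"
proof -
  have "(\<lambda>n. (-lam * x powr a) ^ n / Gamma (real n * a + 1)) \<longlonglongrightarrow> 0"
    by (rule summable_LIMSEQ_zero[OF summable_mittag_leffler_series[OF a]]) simp
  moreover have "(-lam * x powr a) ^ n / Gamma (real n * a + 1) = (-lam) ^ n * rl_kernel (real n * a + 1) x"
    for n
  proof -
    have "(x powr a) ^ n = x powr (real n * a)"
      using x by (simp add: powr_realpow[symmetric] powr_powr mult.commute)
    hence "(-lam * x powr a) ^ n = (-lam) ^ n * x powr (real n * a)"
      by (simp only: power_mult_distrib)
    thus ?thesis using x by (simp add: rl_kernel_def)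
  qed
  ultimately show ?thesis by simp
qed

lemma ml_resolvent_identity:
  assumes x: "x > 0"
  shows "causal_conv (rl_kernel (1 - a)) (ml_causal a lam) x + lam * causal_conv heaviside (ml_causal a lam) x = 1"
proof -
  have b1: "1 - a > 0" using a by simp
  let ?R = "\<lambda>K. causal_conv (rl_kernel (1 - a)) K x + lam * causal_conv heaviside K x"
  have "(\<lambda>N. ?R (ml_partial a lam N)) \<longlonglongrightarrow> ?R (ml_causal a lam)"
  proof (intro tendsto_add tendsto_mult_left causal_conv_ml_partial_tendsto x)
    show "integrable lborel (\<lambda>s. indicator {0..x} s * (\<bar>rl_kernel (1 - a) (x - s)\<bar> * rl_kernel a s))"
      using causal_conv_rl_kernel(1)[OF b1 a(1) x] by (simp add: abs_of_nonneg rl_kernel_nonneg[OF b1])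
    show "integrable lborel (\<lambda>s. indicator {0..x} s * (\<bar>heaviside (x - s)\<bar> * rl_kernel a s))"
      using causal_conv_heaviside_rl_kernel(1)[OF a(1) x] by (simp add: heaviside_def)
  qed simp_all
  moreover have "(\<lambda>N. ?R (ml_partial a lam N)) \<longlonglongrightarrow> 1"
    unfolding ml_partial_resolvent[OF x]
    using tendsto_diff[OF tendsto_const ml_partial_remainder_tendsto[OF x], of 1] by simp
  ultimately show ?thesis by (rule LIMSEQ_unique)
qed

end

lemma causal_conv_ml_causal_heaviside_commute:
  fixes a lam \<tau> :: real and f :: "real \<Rightarrow> real"
  assumes a: "0 < a" "a < 1" and lam: "lam > 0"
    and cont_f: "continuous_on UNIV f" and \<tau>: "\<tau> \<ge> 0"
  shows "causal_conv (ml_causal a lam) (causal_conv heaviside f) \<tau>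
    = causal_conv heaviside (causal_conv (ml_causal a lam) f) \<tau>"
proof -
  define K where "K = ml_causal a lam"
  have [measurable]: "K \<in> borel_measurable borel" "f \<in> borel_measurable borel"
    using ml_causal_measurable[OF a lam] borel_measurable_continuous_onI[OF cont_f]
    by (simp_all add: K_def)
  have KL: "integrable lborel (\<lambda>x. indicator {0..\<tau>} x * K x)"
    unfolding K_def by (rule ml_causal_integrable[OF a lam \<tau>])
  obtain C where C: "\<And>x. x \<in> {0..\<tau>} \<Longrightarrow> \<bar>f x\<bar> \<le> C"
    using continuous_on_Icc_bounded[OF continuous_on_subset[OF cont_f]] by blast
  have "causal_conv K (causal_conv heaviside f) \<tau> = causal_conv (causal_conv K heaviside) f \<tau>"
    using \<tau> by (intro causal_conv_assoc[OF _ _ _ KL integrable_heaviside C]) auto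
  also have "causal_conv K heaviside = causal_conv heaviside K"
    by (rule ext, rule causal_conv_heaviside_commute)
  also have "causal_conv (causal_conv heaviside K) f \<tau> = causal_conv heaviside (causal_conv K f) \<tau>"
    using \<tau> by (intro causal_conv_assoc[OF _ _ _ integrable_heaviside KL C, symmetric]) auto
  finally show ?thesis by (simp add: K_def)
qed

lemma causal_conv_rl_kernel_ml_causal:
  fixes a lam \<tau> :: real and f :: "real \<Rightarrow> real"
  assumes a: "0 < a" "a < 1" and lam: "lam > 0"
    and cont_f: "continuous_on UNIV f" and \<tau>: "\<tau> \<ge> 0"
  shows "causal_conv (rl_kernel (1 - a)) (causal_conv (ml_causal a lam) f) \<tau>
    = causal_conv heaviside f \<tau> - lam * causal_conv heaviside (causal_conv (ml_causal a lam) f) \<tau>"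
proof -
  define K where "K = ml_causal a lam"
  have [measurable]: "K \<in> borel_measurable borel" "f \<in> borel_measurable borel"
    using ml_causal_measurable[OF a lam] borel_measurable_continuous_onI[OF cont_f]
    by (simp_all add: K_def)
  have KL: "integrable lborel (\<lambda>x. indicator {0..\<tau>} x * K x)"
    unfolding K_def by (rule ml_causal_integrable[OF a lam \<tau>])
  have GL: "integrable lborel (\<lambda>x. indicator {0..\<tau>} x * rl_kernel (1 - a) x)"
    using a \<tau> by (intro rl_kernel_integral(1)) auto
  obtain C where C: "\<And>x. x \<in> {0..\<tau>} \<Longrightarrow> \<bar>f x\<bar> \<le> C"
    using continuous_on_Icc_bounded[OF continuous_on_subset[OF cont_f]] by blast
  define nK where "nK = (LINT x|lborel. indicator {0..\<tau>} x * \<bar>K x\<bar>)"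
  have KLa: "integrable lborel (\<lambda>x. indicator {0..\<tau>} x * \<bar>K x\<bar>)"
    using integrable_abs[OF KL] by (simp add: abs_mult)
  have HK_bound: "\<bar>causal_conv heaviside K x\<bar> \<le> nK" if "x \<in> {0..\<tau>}" for x
    unfolding causal_conv_heaviside nK_def
  proof (rule integral_abs_bound_integral[OF _ KLa])
    show "integrable lborel (\<lambda>s. indicator {0..x} s * K s)"
      by (rule integrable_indicator_Icc_mono[OF KL]) (use that in auto)
    show "\<bar>indicator {0..x} s * K s\<bar> \<le> indicator {0..\<tau>} s * \<bar>K s\<bar>" for s
      using that by (auto simp: abs_mult split: split_indicator)
  qed
  have "causal_conv (rl_kernel (1 - a)) (causal_conv K f) \<tau>
      = causal_conv (causal_conv (rl_kernel (1 - a)) K) f \<tau>"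
    using \<tau> by (intro causal_conv_assoc[OF _ _ _ GL KL C]) auto
  also have "\<dots> = causal_conv (\<lambda>x. heaviside x - lam * causal_conv heaviside K x) f \<tau>"
  proof (rule causal_conv_cong_kernel)
    fix x :: real assume "0 < x" "x \<le> \<tau>"
    thus "causal_conv (rl_kernel (1 - a)) K x = heaviside x - lam * causal_conv heaviside K x"
      using ml_resolvent_identity[OF a lam \<open>0 < x\<close>] by (simp add: K_def heaviside_def algebra_simps)
  qed
  also have "\<dots> = causal_conv heaviside f \<tau> - lam * causal_conv (causal_conv heaviside K) f \<tau>"
  proof (rule causal_conv_diff_kernel)
    show "integrable lborel (\<lambda>s. indicator {0..\<tau>} s * (heaviside (\<tau> - s) * f s))"
      by (rule integrable_causal_conv_bounded[where M = 1, OF _ _ _ C]) (auto simp: heaviside_def)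
    show "integrable lborel (\<lambda>s. indicator {0..\<tau>} s * (causal_conv heaviside K (\<tau> - s) * f s))"
      by (rule integrable_causal_conv_bounded[OF _ _ HK_bound C]) auto
  qed
  also have "causal_conv (causal_conv heaviside K) f \<tau> = causal_conv heaviside (causal_conv K f) \<tau>"
    using \<tau> by (intro causal_conv_assoc[OF _ _ _ integrable_heaviside KL C, symmetric]) auto
  finally show ?thesis by (simp add: K_def)
qed

lemma causal_conv_ml_causal_eq_integral:
  fixes a lam x :: real and g :: "real \<Rightarrow> real"
  assumes a: "0 < a" "a < 1" and lam: "lam > 0"
    and cont_g: "continuous_on UNIV g" and x: "x \<ge> 0"
  shows "causal_conv (ml_causal a lam) g x = integral {0..x} (\<lambda>s. ml_kernel a lam (x - s) * g s)"
proof -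
  define K where "K = ml_causal a lam"
  have [measurable]: "K \<in> borel_measurable borel" "g \<in> borel_measurable borel"
    using ml_causal_measurable[OF a lam] borel_measurable_continuous_onI[OF cont_g]
    by (simp_all add: K_def)
  obtain C where C: "C \<ge> 0" "\<And>s. s \<in> {0..x} \<Longrightarrow> \<bar>g s\<bar> \<le> C"
    using continuous_on_Icc_bounded[OF continuous_on_subset[OF cont_g]] by blast
  have "integrable lborel (\<lambda>s. indicator {0..x} s * \<bar>K s\<bar>)"
    using integrable_abs[OF ml_causal_integrable[OF a lam x]] by (simp add: K_def abs_mult)
  hence iK: "integrable lborel (\<lambda>s. C * (indicator {0..x} s * \<bar>K (x - s)\<bar>))"
    by (intro integrable_mult_right integrable_indicator_Icc_reflect)
  have "set_integrable lborel {0..x} (\<lambda>s. K (x - s) * g s)"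
    unfolding set_integrable_def
  proof (rule Bochner_Integration.integrable_bound[OF iK])
    show "AE s in lborel. norm (indicator {0..x} s *\<^sub>R (K (x - s) * g s))
        \<le> norm (C * (indicator {0..x} s * \<bar>K (x - s)\<bar>))"
      using C by (intro AE_I2) (auto simp: abs_mult mult.commute[of C] intro: mult_left_mono split: split_indicator)
  qed measurable
  from set_borel_integral_eq_integral(2)[OF this]
  have "causal_conv K g x = integral {0..x} (\<lambda>s. K (x - s) * g s)"
    by (simp add: causal_conv_def set_lebesgue_integral_def)
  also have "\<dots> = integral {0..x} (\<lambda>s. ml_kernel a lam (x - s) * g s)"
    by (intro integral_cong) (auto simp: K_def ml_causal_def ml_kernel_def)
  finally show ?thesis by (simp add: K_def)
qed

lemma integral_ml_kernel_antiderivative: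
  fixes a lam x :: real and f q :: "real \<Rightarrow> real"
  assumes a: "0 < a" "a < 1" and lam: "lam > 0"
    and cont_f: "continuous_on UNIV f" and x: "x \<ge> 0"
    and q: "\<And>s. s \<in> {0..x} \<Longrightarrow> q s = integral {0..s} f"
  shows "integral {0..x} (\<lambda>s. ml_kernel a lam (x - s) * q s)
    = integral {0..x} (causal_conv (ml_causal a lam) f)"
proof -
  define F where "F y = integral {0..clamp 0 x y} f" for y
  have "continuous_on {0..x} (\<lambda>y. integral {0..y} f)"
    by (intro indefinite_integral_continuous_1 integrable_continuous_real continuous_on_subset[OF cont_f])
      simp
  from continuous_on_clamp_Icc[OF this] have cont_F: "continuous_on UNIV F"
    by (simp add: F_def)
  have F_eq: "F s = integral {0..s} f" if "s \<in> {0..x}" for s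
    using that by (simp add: F_def)
  have "integral {0..x} (\<lambda>s. ml_kernel a lam (x - s) * q s)
      = integral {0..x} (\<lambda>s. ml_kernel a lam (x - s) * F s)"
    by (intro integral_cong) (simp add: q F_eq)
  also have "\<dots> = causal_conv (ml_causal a lam) F x"
    by (rule causal_conv_ml_causal_eq_integral[OF a lam cont_F x, symmetric])
  also have "\<dots> = causal_conv (ml_causal a lam) (causal_conv heaviside f) x"
    by (intro causal_conv_cong) (auto simp: F_eq intro!: causal_conv_heaviside_integral[symmetric]
        continuous_on_subset[OF cont_f])
  also have "\<dots> = causal_conv heaviside (causal_conv (ml_causal a lam) f) x"
    by (rule causal_conv_ml_causal_heaviside_commute[OF a lam cont_f x])
  also have "\<dots> = integral {0..x} (causal_conv (ml_causal a lam) f)"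
    by (intro causal_conv_heaviside_integral continuous_on_causal_conv ml_causal_measurable
        ml_causal_integrable a lam x cont_f)
  finally show ?thesis .
qed

section \<open>Positive definiteness of Riemann-Liouville kernels\<close>

lemma integral_powr_exp_Gamma:
  fixes b y :: real
  assumes b: "0 < b" "b < 1" and y: "y > 0"
  shows "integrable lborel (\<lambda>r. indicator {0..} r * (r powr (-b) * exp (-(r * y))))"
        "(LINT r|lborel. indicator {0..} r * (r powr (-b) * exp (-(r * y)))) = Gamma (1 - b) * y powr (b - 1)"
proof -
  have hi: "((\<lambda>u. u powr (1 - b - 1) / exp u) has_integral Gamma (1 - b)) {0..}"
    by (rule Gamma_integral_real) (use b in auto)
  have m: "(\<lambda>u. u powr (1 - b - 1) / exp u) \<in> borel_measurable borel" by measurable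
  have i1: "integrable lborel (\<lambda>u. indicator {0..} u * (u powr (1 - b - 1) / exp u))"
   and v1: "(LINT u|lborel. indicator {0..} u * (u powr (1 - b - 1) / exp u)) = Gamma (1 - b)"
    by (rule nonneg_has_integral_lborel[OF m _ hi]; simp)+
  define f where "f u = indicator {0..} u * (u powr (1 - b - 1) / exp u)" for u :: real
  have eq: "f (y * r) = y powr (-b) * (indicator {0..} r * (r powr (-b) * exp (-(r * y))))" for r
  proof (cases "r \<ge> 0")
    case True
    have "(y * r) powr (-b) = y powr (-b) * r powr (-b)" using True y by (simp add: powr_mult)
    thus ?thesis using True y by (simp add: f_def exp_minus field_simps mult.commute)
  next
    case False
    thus ?thesis using y by (simp add: f_def zero_le_mult_iff)
  qed
  have i2: "integrable lborel (\<lambda>r. f (0 + y * r))"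
    by (rule lborel_integrable_real_affine) (use i1 y in \<open>auto simp: f_def\<close>)
  hence "integrable lborel (\<lambda>r. y powr b * f (0 + y * r))" by (rule integrable_mult_right)
  moreover have "(\<lambda>r. y powr b * f (0 + y * r)) = (\<lambda>r. indicator {0..} r * (r powr (-b) * exp (-(r * y))))"
  proof (rule ext)
    fix r
    have yy: "y powr b * y powr (-b) = 1" using y by (simp add: powr_minus)
    show "y powr b * f (0 + y * r) = indicator {0..} r * (r powr (-b) * exp (-(r * y)))"
      unfolding add_0_left eq by (simp only: mult.assoc[symmetric] yy mult_1)
  qed
  ultimately show "integrable lborel (\<lambda>r. indicator {0..} r * (r powr (-b) * exp (-(r * y))))" by metis
  have "Gamma (1 - b) = (LINT u|lborel. f u)" using v1 by (simp add: f_def)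
  also have "\<dots> = \<bar>y\<bar> *\<^sub>R (LINT r|lborel. f (0 + y * r))"
    by (rule lborel_integral_real_affine) (use y in simp)
  also have "\<dots> = y * y powr (-b) * (LINT r|lborel. indicator {0..} r * (r powr (-b) * exp (-(r * y))))"
    using y by (simp add: eq)
  also have "y * y powr (-b) = y powr (1 - b)"
    using y by (simp add: powr_diff powr_minus divide_inverse)
  finally have "Gamma (1 - b) = y powr (1 - b) * (LINT r|lborel. indicator {0..} r * (r powr (-b) * exp (-(r * y))))" .
  thus "(LINT r|lborel. indicator {0..} r * (r powr (-b) * exp (-(r * y)))) = Gamma (1 - b) * y powr (b - 1)"
    using y by (simp add: powr_diff powr_minus field_simps)
qed

lemma rl_kernel_exp_repr:
  fixes b x :: real
  assumes b: "0 < b" "b < 1" and x: "x > 0"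
  shows "integrable lborel (\<lambda>r. indicator {0..} r * (r powr (-b) * exp (-(r * x))))"
    "(LINT r|lborel. indicator {0..} r * (r powr (-b) * exp (-(r * x))))
      = Gamma b * Gamma (1 - b) * rl_kernel b x"
proof -
  have "Gamma b \<noteq> 0" using Gamma_real_pos[OF b(1)] by simp
  thus "integrable lborel (\<lambda>r. indicator {0..} r * (r powr (-b) * exp (-(r * x))))"
    "(LINT r|lborel. indicator {0..} r * (r powr (-b) * exp (-(r * x))))
      = Gamma b * Gamma (1 - b) * rl_kernel b x"
    using integral_powr_exp_Gamma[OF b x] x by (simp_all add: rl_kernel_def)
qed

text \<open>For h(tau) = exp(-r tau) int_0^tau exp(r s) v(s) ds one has h' = v - r h, so v h = (h^2/2)' + r h^2.\<close>

lemma exp_kernel_positive: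
  fixes v :: "real \<Rightarrow> real" and r t :: real
  assumes cont_v: "continuous_on UNIV v" and r: "r \<ge> 0" and t: "t \<ge> 0"
  shows "0 \<le> integral {0..t} (\<lambda>\<tau>. v \<tau> * (exp (-(r * \<tau>)) * integral {0..\<tau>} (\<lambda>s. exp (r * s) * v s)))"
proof -
  define H where "H \<tau> = integral {0..\<tau>} (\<lambda>s. exp (r * s) * v s)" for \<tau>
  define h where "h \<tau> = exp (-(r * \<tau>)) * H \<tau>" for \<tau>
  have ce: "continuous_on {0..t} (\<lambda>s. exp (r * s) * v s)"
    by (intro continuous_intros continuous_on_subset[OF cont_v]) auto
  have dH: "(H has_real_derivative exp (r * \<tau>) * v \<tau>) (at \<tau> within {0..t})" if "\<tau> \<in> {0..t}" for \<tau>
    unfolding H_def has_real_derivative_iff_has_vector_derivative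
    by (rule integral_has_vector_derivative[OF ce that])
  have dh: "(h has_real_derivative (v \<tau> - r * h \<tau>)) (at \<tau> within {0..t})" if "\<tau> \<in> {0..t}" for \<tau>
  proof -
    have e: "((\<lambda>\<tau>. exp (-(r * \<tau>))) has_real_derivative (-r * exp (-(r * \<tau>)))) (at \<tau> within {0..t})"
      by (auto intro!: derivative_eq_intros)
    show ?thesis
      using DERIV_mult[OF e dH[OF that]] unfolding h_def[abs_def]
      by (rule DERIV_cong) (simp add: exp_minus field_simps)
  qed
  have contH: "continuous_on {0..t} h"
    unfolding continuous_on_eq_continuous_within
  proof
    fix x assume "x \<in> {0..t}"
    from dh[OF this] show "continuous (at x within {0..t}) h"
      unfolding has_real_derivative_iff_has_vector_derivative by (rule has_vector_derivative_continuous)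
  qed
  have dq: "((\<lambda>\<tau>. h \<tau> ^ 2 / 2) has_vector_derivative (h \<tau> * (v \<tau> - r * h \<tau>))) (at \<tau> within {0..t})"
    if "\<tau> \<in> {0..t}" for \<tau>
  proof -
    have "((\<lambda>\<tau>. h \<tau> ^ 2 / 2) has_real_derivative (h \<tau> * (v \<tau> - r * h \<tau>))) (at \<tau> within {0..t})"
      using dh[OF that] by (auto intro!: derivative_eq_intros)
    thus ?thesis by (simp add: has_real_derivative_iff_has_vector_derivative)
  qed
  have i1: "((\<lambda>\<tau>. h \<tau> * (v \<tau> - r * h \<tau>)) has_integral (h t ^ 2 / 2 - h 0 ^ 2 / 2)) {0..t}"
    by (rule fundamental_theorem_of_calculus[OF t dq])
  have h0: "h 0 = 0" by (simp add: h_def H_def)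
  have ch2: "continuous_on {0..t} (\<lambda>\<tau>. r * h \<tau> ^ 2)" by (intro continuous_intros contH)
  have i2: "((\<lambda>\<tau>. r * h \<tau> ^ 2) has_integral integral {0..t} (\<lambda>\<tau>. r * h \<tau> ^ 2)) {0..t}"
    using integrable_continuous_real[OF ch2] by (rule integrable_integral)
  have n2: "integral {0..t} (\<lambda>\<tau>. r * h \<tau> ^ 2) \<ge> 0"
    by (rule integral_nonneg[OF integrable_continuous_real[OF ch2]]) (use r in auto)
  have "((\<lambda>\<tau>. h \<tau> * (v \<tau> - r * h \<tau>) + r * h \<tau> ^ 2) has_integral
          (h t ^ 2 / 2 - h 0 ^ 2 / 2 + integral {0..t} (\<lambda>\<tau>. r * h \<tau> ^ 2))) {0..t}"
    by (rule has_integral_add[OF i1 i2])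
  moreover have "(\<lambda>\<tau>. h \<tau> * (v \<tau> - r * h \<tau>) + r * h \<tau> ^ 2) = (\<lambda>\<tau>. v \<tau> * (exp (-(r * \<tau>)) * integral {0..\<tau>} (\<lambda>s. exp (r * s) * v s)))"
    by (auto simp: fun_eq_iff h_def H_def power2_eq_square algebra_simps)
  ultimately have "((\<lambda>\<tau>. v \<tau> * (exp (-(r * \<tau>)) * integral {0..\<tau>} (\<lambda>s. exp (r * s) * v s))) has_integral
          (h t ^ 2 / 2 + integral {0..t} (\<lambda>\<tau>. r * h \<tau> ^ 2))) {0..t}"
    using h0 by simp
  hence "integral {0..t} (\<lambda>\<tau>. v \<tau> * (exp (-(r * \<tau>)) * integral {0..\<tau>} (\<lambda>s. exp (r * s) * v s)))
         = h t ^ 2 / 2 + integral {0..t} (\<lambda>\<tau>. r * h \<tau> ^ 2)"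
    by (rule integral_unique)
  thus ?thesis using n2 by simp
qed

definition exp_conv :: "(real \<Rightarrow> real) \<Rightarrow> real \<Rightarrow> real \<Rightarrow> real" where
  "exp_conv v r \<tau> = (LINT s|lborel. indicator {0..\<tau>} s * (exp (-(r * (\<tau> - s))) * v s))"

lemma exp_conv_eq:
  fixes v :: "real \<Rightarrow> real"
  assumes cont_v: "continuous_on UNIV v"
  shows "exp_conv v r \<tau> = exp (-(r * \<tau>)) * integral {0..\<tau>} (\<lambda>s. exp (r * s) * v s)"
proof -
  have "exp_conv v r \<tau> = integral {0..\<tau>} (\<lambda>s. exp (-(r * (\<tau> - s))) * v s)"
    unfolding exp_conv_def
    by (intro lborel_integral_Icc_eq_integral continuous_intros continuous_on_subset[OF cont_v]) auto
  also have "\<dots> = integral {0..\<tau>} (\<lambda>s. exp (-(r * \<tau>)) * (exp (r * s) * v s))"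
    by (intro integral_cong) (simp add: exp_diff exp_minus field_simps right_diff_distrib)
  finally show ?thesis by simp
qed

lemma exp_conv_measurable [measurable]:
  fixes v :: "real \<Rightarrow> real"
  assumes [measurable]: "v \<in> borel_measurable borel"
  shows "(\<lambda>(\<tau>, r). exp_conv v r \<tau>) \<in> borel_measurable (lborel \<Otimes>\<^sub>M lborel)"
proof -
  have [measurable]: "v \<in> borel_measurable lborel" by simp
  show ?thesis unfolding exp_conv_def indicator_def atLeastAtMost_iff by measurable
qed

lemma exp_conv_bound:
  fixes v :: "real \<Rightarrow> real"
  assumes cont_v: "continuous_on UNIV v" and V: "\<And>x. x \<in> {0..\<tau>} \<Longrightarrow> \<bar>v x\<bar> \<le> V"
    and r: "r \<ge> 0" and \<tau>: "\<tau> \<ge> 0"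
  shows "\<bar>exp_conv v r \<tau>\<bar> \<le> V * \<tau>" "r > 0 \<Longrightarrow> \<bar>exp_conv v r \<tau>\<bar> \<le> V / r"
proof -
  have V0: "V \<ge> 0" using V[of 0] \<tau> by auto
  have c: "continuous_on {0..\<tau>} (\<lambda>s. exp (r * s) * v s)"
    by (intro continuous_intros continuous_on_subset[OF cont_v]) auto
  have c2: "continuous_on {0..\<tau>} (\<lambda>s. exp (r * s) * V)"
    by (intro continuous_intros)
  have nb: "\<bar>integral {0..\<tau>} (\<lambda>s. exp (r * s) * v s)\<bar> \<le> integral {0..\<tau>} (\<lambda>s. exp (r * s) * V)"
    using integral_norm_bound_integral[OF integrable_continuous_real[OF c] integrable_continuous_real[OF c2]]
      V by (simp add: abs_mult mult_left_mono)
  have e0: "exp (-(r * \<tau>)) > 0" by simp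
  have "\<bar>exp_conv v r \<tau>\<bar> = exp (-(r * \<tau>)) * \<bar>integral {0..\<tau>} (\<lambda>s. exp (r * s) * v s)\<bar>"
    by (simp add: exp_conv_eq[OF cont_v] abs_mult)
  also have "\<dots> \<le> exp (-(r * \<tau>)) * integral {0..\<tau>} (\<lambda>s. exp (r * s) * V)"
    by (rule mult_left_mono[OF nb]) simp
  finally have main: "\<bar>exp_conv v r \<tau>\<bar> \<le> exp (-(r * \<tau>)) * integral {0..\<tau>} (\<lambda>s. exp (r * s) * V)" .
  have "integral {0..\<tau>} (\<lambda>s. exp (r * s) * V) \<le> integral {0..\<tau>} (\<lambda>s. exp (r * \<tau>) * V)"
    by (rule integral_le[OF integrable_continuous_real[OF c2]]) (use r V0 in \<open>auto intro!: mult_right_mono mult_left_mono\<close>)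
  also have "\<dots> = exp (r * \<tau>) * V * \<tau>" using \<tau> by simp
  finally have "\<bar>exp_conv v r \<tau>\<bar> \<le> exp (-(r * \<tau>)) * (exp (r * \<tau>) * V * \<tau>)"
    using main e0 by (meson mult_left_mono order_trans less_imp_le)
  thus "\<bar>exp_conv v r \<tau>\<bar> \<le> V * \<tau>" by (simp add: exp_minus field_simps)
  assume rp: "r > 0"
  have "((\<lambda>s. exp (r * s) * V) has_integral (exp (r * \<tau>) * V / r - exp (r * 0) * V / r)) {0..\<tau>}"
  proof (rule fundamental_theorem_of_calculus[OF \<tau>])
    fix x assume "x \<in> {0..\<tau>}"
    show "((\<lambda>s. exp (r * s) * V / r) has_vector_derivative exp (r * x) * V) (at x within {0..\<tau>})"
      unfolding has_real_derivative_iff_has_vector_derivative[symmetric]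
      using rp by (auto intro!: derivative_eq_intros)
  qed
  hence "integral {0..\<tau>} (\<lambda>s. exp (r * s) * V) = exp (r * \<tau>) * V / r - V / r"
    by (intro integral_unique) simp
  hence "\<bar>exp_conv v r \<tau>\<bar> \<le> exp (-(r * \<tau>)) * (exp (r * \<tau>) * V / r - V / r)" using main by simp
  also have "\<dots> = V / r - exp (-(r * \<tau>)) * V / r" by (simp add: exp_minus field_simps)
  also have "\<dots> \<le> V / r" using V0 rp by simp
  finally show "\<bar>exp_conv v r \<tau>\<bar> \<le> V / r" .
qed

lemma exp_conv_positive:
  fixes v :: "real \<Rightarrow> real"
  assumes cont_v: "continuous_on UNIV v" and r: "r \<ge> 0" and t: "t \<ge> 0"
  shows "0 \<le> (LINT \<tau>|lborel. indicator {0..t} \<tau> * (v \<tau> * exp_conv v r \<tau>))"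
proof -
  have "continuous_on {0..t} (\<lambda>\<tau>. integral {0..\<tau>} (\<lambda>s. exp (r * s) * v s))"
    by (intro indefinite_integral_continuous_1 integrable_continuous_real continuous_intros
        continuous_on_subset[OF cont_v]) simp
  hence "(LINT \<tau>|lborel. indicator {0..t} \<tau> * (v \<tau> * exp_conv v r \<tau>))
      = integral {0..t} (\<lambda>\<tau>. v \<tau> * (exp (-(r * \<tau>)) * integral {0..\<tau>} (\<lambda>s. exp (r * s) * v s)))"
    unfolding exp_conv_eq[OF cont_v]
    by (intro lborel_integral_Icc_eq_integral continuous_intros continuous_on_subset[OF cont_v]) auto
  thus ?thesis using exp_kernel_positive[OF cont_v r t] by simp
qed

lemma causal_conv_rl_kernel_exp_repr:
  fixes v :: "real \<Rightarrow> real"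
  assumes b: "0 < b" "b < 1" and cont_v: "continuous_on UNIV v"
    and V: "\<And>x. x \<in> {0..\<tau>} \<Longrightarrow> \<bar>v x\<bar> \<le> V" and \<tau>: "\<tau> \<ge> 0"
  shows "causal_conv (rl_kernel b) v \<tau> = 1 / (Gamma b * Gamma (1 - b))
    * (LINT r|lborel. indicator {0..} r * (r powr (-b) * exp_conv v r \<tau>))"
proof -
  have [measurable]: "v \<in> borel_measurable borel" by (rule borel_measurable_continuous_onI[OF cont_v])
  have V0: "V \<ge> 0" using V[of 0] \<tau> by auto
  have gb: "Gamma b > 0" "Gamma (1 - b) > 0" using b by auto
  define E where "E s r = indicator {0..\<tau>} s * (indicator {0..} r * (r powr (-b) * exp (-(r * (\<tau> - s)))))"
    for s r :: real
  define F where "F s r = v s * E s r" for s r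
  define G where "G s r = V * E s r" for s r
  have FG_measurable [measurable]: "(\<lambda>(s, r). F s r) \<in> borel_measurable (lborel \<Otimes>\<^sub>M lborel)"
    "(\<lambda>(s, r). G s r) \<in> borel_measurable (lborel \<Otimes>\<^sub>M lborel)"
    unfolding F_def G_def E_def by measurable
  have E_repr: "integrable lborel (E s) \<and> (LINT r|lborel. E s r)
      = Gamma b * Gamma (1 - b) * (indicator {0..\<tau>} s * rl_kernel b (\<tau> - s))" if "s \<noteq> \<tau>" for s
  proof (cases "s \<in> {0..\<tau>}")
    case True
    hence "\<tau> - s > 0" using that by auto
    thus ?thesis
      using True rl_kernel_exp_repr[OF b, of "\<tau> - s"] by (simp add: E_def[abs_def])
  qed (simp add: E_def[abs_def])
  hence E_repr_AE: "AE s in lborel. integrable lborel (E s) \<and> (LINT r|lborel. E s r)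
      = Gamma b * Gamma (1 - b) * (indicator {0..\<tau>} s * rl_kernel b (\<tau> - s))"
    using AE_lborel_singleton[of \<tau>] by (auto elim!: AE_mp)
  have bnd: "\<bar>F s r\<bar> \<le> G s r" for s r
    using V[of s] by (auto simp: F_def G_def E_def abs_mult intro: mult_right_mono split: split_indicator)
  have G_int: "AE s in lborel. integrable lborel (G s)"
    using E_repr_AE by eventually_elim (simp add: G_def[abs_def])
  have "integrable lborel (\<lambda>s. V * (Gamma b * Gamma (1 - b) * (indicator {0..\<tau>} s * rl_kernel b (\<tau> - s))))"
    by (intro integrable_mult_right integrable_indicator_Icc_reflect rl_kernel_integral(1) b(1) \<tau>)
  hence GG_int: "integrable lborel (\<lambda>s. LINT r|lborel. G s r)"
  proof (rule integrable_cong_AE_imp)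
    show "AE s in lborel. V * (Gamma b * Gamma (1 - b) * (indicator {0..\<tau>} s * rl_kernel b (\<tau> - s)))
        = (LINT r|lborel. G s r)"
      using E_repr_AE by eventually_elim (simp add: G_def)
  qed measurable
  have swap: "(LINT s|lborel. LINT r|lborel. F s r) = (LINT r|lborel. LINT s|lborel. F s r)"
    by (rule Fubini_integral_swap_dominated[OF FG_measurable bnd G_int GG_int])
  let ?c = "1 / (Gamma b * Gamma (1 - b))"
  have "causal_conv (rl_kernel b) v \<tau> = (LINT s|lborel. ?c * (LINT r|lborel. F s r))"
    unfolding causal_conv_def
  proof (rule integral_cong_AE)
    show "AE s in lborel. indicator {0..\<tau>} s * (rl_kernel b (\<tau> - s) * v s) = ?c * (LINT r|lborel. F s r)"
      using E_repr_AE by eventually_elim (use gb in \<open>simp add: F_def\<close>)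
  qed measurable
  also have "\<dots> = ?c * (LINT r|lborel. LINT s|lborel. F s r)" by (simp add: swap)
  also have "(LINT r|lborel. LINT s|lborel. F s r)
      = (LINT r|lborel. indicator {0..} r * (r powr (-b) * exp_conv v r \<tau>))"
  proof (rule Bochner_Integration.integral_cong[OF refl])
    fix r
    have "(LINT s|lborel. F s r) = (LINT s|lborel. (indicator {0..} r * r powr (-b))
        * (indicator {0..\<tau>} s * (exp (-(r * (\<tau> - s))) * v s)))"
      by (intro Bochner_Integration.integral_cong refl) (simp add: F_def E_def mult_ac)
    thus "(LINT s|lborel. F s r) = indicator {0..} r * (r powr (-b) * exp_conv v r \<tau>)"
      by (simp add: exp_conv_def)
  qed
  finally show ?thesis .
qed

text \<open>Integrable majorant in r of r^(-b) |exp_conv v r tau|, uniform in tau in [0,t]; it combines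
  the bounds V tau (small r) and V/r (large r) of \<open>exp_conv_bound\<close>.\<close>

definition powr_majorant :: "real \<Rightarrow> real \<Rightarrow> real \<Rightarrow> real" where
  "powr_majorant b t r = indicator {0..1} r * (t * r powr (-b)) + indicator {1..} r * r powr (-b - 1)"

lemma exp_conv_powr_bound:
  fixes v :: "real \<Rightarrow> real"
  assumes cont_v: "continuous_on UNIV v" and V: "\<And>x. x \<in> {0..t} \<Longrightarrow> \<bar>v x\<bar> \<le> V"
    and \<tau>: "\<tau> \<in> {0..t}" and r: "r \<ge> 0"
  shows "r powr (-b) * \<bar>exp_conv v r \<tau>\<bar> \<le> V * powr_majorant b t r"
proof -
  have V0: "V \<ge> 0" using V[OF \<tau>] by linarith
  have V': "\<And>x. x \<in> {0..\<tau>} \<Longrightarrow> \<bar>v x\<bar> \<le> V" using V \<tau> by auto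
  show ?thesis
  proof (cases "r \<le> 1")
    case True
    have "\<bar>exp_conv v r \<tau>\<bar> \<le> V * \<tau>" by (rule exp_conv_bound(1)[OF cont_v V' r]) (use \<tau> in auto)
    also have "\<dots> \<le> V * t" using \<tau> V0 by (intro mult_left_mono) auto
    finally have "r powr (-b) * \<bar>exp_conv v r \<tau>\<bar> \<le> r powr (-b) * (V * t)" by (intro mult_left_mono) auto
    also have "\<dots> = V * (indicator {0..1} r * (t * r powr (-b)))" using True r by simp
    also have "\<dots> \<le> V * powr_majorant b t r" unfolding powr_majorant_def using V0 by (intro mult_left_mono) auto
    finally show ?thesis .
  next
    case False
    hence rp: "r > 0" by simp
    have "\<bar>exp_conv v r \<tau>\<bar> \<le> V / r" by (rule exp_conv_bound(2)[OF cont_v V' r _ rp]) (use \<tau> in auto)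
    hence "r powr (-b) * \<bar>exp_conv v r \<tau>\<bar> \<le> r powr (-b) * (V / r)" by (intro mult_left_mono) auto
    also have "\<dots> = V * r powr (-b - 1)" using rp by (simp add: powr_diff field_simps)
    also have "\<dots> = V * (indicator {1..} r * r powr (-b - 1))" using False by simp
    also have "\<dots> \<le> V * powr_majorant b t r" unfolding powr_majorant_def using V0 False by (intro mult_left_mono) auto
    finally show ?thesis .
  qed
qed

lemma integrable_powr_majorant:
  fixes b t :: real
  assumes b: "0 < b" "b < 1" and t: "t \<ge> 0"
  shows "integrable lborel (powr_majorant b t)"
  unfolding powr_majorant_def
proof (rule Bochner_Integration.integrable_add)
  have "((\<lambda>r. r powr (-b)) has_integral (1 powr (-b + 1) / (-b + 1))) {0..1}"
    by (rule has_integral_powr_from_0) (use b in auto)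
  moreover have m1: "(\<lambda>r. r powr (-b)) \<in> borel_measurable borel" by measurable
  ultimately have "integrable lborel (\<lambda>r. indicator {0..1} r * r powr (-b))"
    by (intro nonneg_has_integral_lborel(1)) auto
  hence "integrable lborel (\<lambda>r. t * (indicator {0..1} r * r powr (-b)))" by (rule integrable_mult_right)
  thus "integrable lborel (\<lambda>r. indicator {0..1} r * (t * r powr (-b)))" by (simp add: mult_ac)
  have "((\<lambda>r. r powr (-b - 1)) has_integral -(1 powr (-b - 1 + 1)) / (-b - 1 + 1)) {1..}"
    by (rule has_integral_powr_to_inf) (use b in auto)
  moreover have m2: "(\<lambda>r. r powr (-b - 1)) \<in> borel_measurable borel" by measurable
  ultimately show "integrable lborel (\<lambda>r. indicator {1..} r * r powr (-b - 1))"
    by (intro nonneg_has_integral_lborel(1)) auto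
qed

lemma rl_kernel_positive:
  fixes v :: "real \<Rightarrow> real" and b t :: real
  assumes b: "0 < b" "b < 1" and cont_v: "continuous_on UNIV v" and t: "t \<ge> 0"
  shows "0 \<le> (LINT \<tau>|lborel. indicator {0..t} \<tau> * (v \<tau> * causal_conv (rl_kernel b) v \<tau>))"
proof -
  have [measurable]: "v \<in> borel_measurable borel" by (rule borel_measurable_continuous_onI[OF cont_v])
  obtain V where V0: "V \<ge> 0" and V: "\<And>x. x \<in> {0..t} \<Longrightarrow> \<bar>v x\<bar> \<le> V"
    using continuous_on_Icc_bounded[OF continuous_on_subset[OF cont_v]] by blast
  define c where "c = 1 / (Gamma b * Gamma (1 - b))"
  define F where "F \<tau> r = indicator {0..t} \<tau> * v \<tau> * (indicator {0..} r * (r powr (-b) * exp_conv v r \<tau>))"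
    for \<tau> r
  define G where "G \<tau> r = V * V * (indicator {0..t} \<tau> * powr_majorant b t r)" for \<tau> r
  have FG_measurable [measurable]: "(\<lambda>(\<tau>, r). F \<tau> r) \<in> borel_measurable (lborel \<Otimes>\<^sub>M lborel)"
    "(\<lambda>(\<tau>, r). G \<tau> r) \<in> borel_measurable (lborel \<Otimes>\<^sub>M lborel)"
    unfolding F_def G_def powr_majorant_def by measurable
  have bnd: "\<bar>F \<tau> r\<bar> \<le> G \<tau> r" for \<tau> r
  proof (cases "\<tau> \<in> {0..t} \<and> r \<ge> 0")
    case True
    have "\<bar>v \<tau>\<bar> \<le> V" using True V by auto
    moreover have "r powr (-b) * \<bar>exp_conv v r \<tau>\<bar> \<le> V * powr_majorant b t r"
      using True by (intro exp_conv_powr_bound[OF cont_v V]) auto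
    ultimately have "\<bar>v \<tau>\<bar> * (r powr (-b) * \<bar>exp_conv v r \<tau>\<bar>) \<le> V * (V * powr_majorant b t r)"
      using V0 by (rule mult_mono) auto
    thus ?thesis using True by (simp add: F_def G_def abs_mult mult_ac)
  next
    case False
    hence "F \<tau> r = 0" by (auto simp: F_def)
    moreover have "G \<tau> r \<ge> 0" using t V0 by (simp add: G_def powr_majorant_def)
    ultimately show ?thesis by simp
  qed
  have "integrable lborel (\<lambda>\<tau>. indicator {0..t} \<tau> * (V * V * (LINT r|lborel. powr_majorant b t r)))"
    by (rule integrable_indicator_Icc_const)
  hence GG_int: "integrable lborel (\<lambda>\<tau>. LINT r|lborel. G \<tau> r)"
    by (simp add: G_def mult_ac)
  have "AE \<tau> in lborel. integrable lborel (G \<tau>)"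
    unfolding G_def[abs_def] by (intro AE_I2 integrable_mult_right integrable_powr_majorant[OF b t])
  from Fubini_integral_swap_dominated[OF FG_measurable bnd this GG_int]
  have swap: "(LINT \<tau>|lborel. LINT r|lborel. F \<tau> r) = (LINT r|lborel. LINT \<tau>|lborel. F \<tau> r)" .
  have "(LINT \<tau>|lborel. indicator {0..t} \<tau> * (v \<tau> * causal_conv (rl_kernel b) v \<tau>))
      = (LINT \<tau>|lborel. c * (LINT r|lborel. F \<tau> r))"
  proof (rule Bochner_Integration.integral_cong[OF refl])
    fix \<tau>
    show "indicator {0..t} \<tau> * (v \<tau> * causal_conv (rl_kernel b) v \<tau>) = c * (LINT r|lborel. F \<tau> r)"
    proof (cases "\<tau> \<in> {0..t}")
      case True
      have "causal_conv (rl_kernel b) v \<tau>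
          = c * (LINT r|lborel. indicator {0..} r * (r powr (-b) * exp_conv v r \<tau>))"
        unfolding c_def using V True by (intro causal_conv_rl_kernel_exp_repr[OF b cont_v, of _ V]) auto
      thus ?thesis using True by (simp add: F_def)
    qed (simp add: F_def)
  qed
  also have "\<dots> = c * (LINT r|lborel. LINT \<tau>|lborel. F \<tau> r)" by (simp add: swap)
  also have "(LINT r|lborel. LINT \<tau>|lborel. F \<tau> r) = (LINT r|lborel. indicator {0..} r * r powr (-b)
      * (LINT \<tau>|lborel. indicator {0..t} \<tau> * (v \<tau> * exp_conv v r \<tau>)))"
  proof (intro Bochner_Integration.integral_cong refl)
    fix r
    have "(\<lambda>\<tau>. F \<tau> r) = (\<lambda>\<tau>. (indicator {0..} r * r powr (-b))
        * (indicator {0..t} \<tau> * (v \<tau> * exp_conv v r \<tau>)))"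
      by (simp add: F_def fun_eq_iff mult_ac)
    thus "(LINT \<tau>|lborel. F \<tau> r) = indicator {0..} r * r powr (-b)
        * (LINT \<tau>|lborel. indicator {0..t} \<tau> * (v \<tau> * exp_conv v r \<tau>))"
      by (simp only: integral_mult_right_zero)
  qed
  also have "\<dots> \<ge> 0"
  proof (intro integral_nonneg_AE AE_I2)
    fix r :: real
    show "0 \<le> indicator {0..} r * r powr (-b)
        * (LINT \<tau>|lborel. indicator {0..t} \<tau> * (v \<tau> * exp_conv v r \<tau>))"
      using exp_conv_positive[OF cont_v _ t, of r] by (cases "r \<ge> 0") simp_all
  qed
  ultimately show ?thesis using b by (simp add: c_def)
qed

section \<open>Energy estimate\<close>

lemma ml_causal_energy_nonneg:
  fixes a lam t :: real and f :: "real \<Rightarrow> real"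
  assumes a: "0 < a" "a < 1" and lam: "lam > 0"
    and cont_f: "continuous_on UNIV f" and t: "t \<ge> 0"
  shows "0 \<le> integral {0..t} (\<lambda>x. causal_conv (ml_causal a lam) f x
    * (integral {0..x} f - lam * integral {0..x} (causal_conv (ml_causal a lam) f)))"
proof -
  define v where "v = causal_conv (ml_causal a lam) f"
  have cont_v: "continuous_on {0..t} v"
    unfolding v_def by (intro continuous_on_causal_conv ml_causal_measurable ml_causal_integrable a lam t cont_f)
  define ve where "ve x = v (clamp 0 t x)" for x
  have ve_eq: "ve x = v x" if "x \<in> {0..t}" for x
    using that by (simp add: ve_def)
  have resolvent: "causal_conv (rl_kernel (1 - a)) ve x = integral {0..x} f - lam * integral {0..x} v"
    if x: "x \<in> {0..t}" for x
  proof -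
    have "causal_conv (rl_kernel (1 - a)) ve x = causal_conv (rl_kernel (1 - a)) v x"
      using x by (intro causal_conv_cong ve_eq) auto
    also have "\<dots> = causal_conv heaviside f x - lam * causal_conv heaviside v x"
      unfolding v_def using x by (intro causal_conv_rl_kernel_ml_causal[OF a lam cont_f]) auto
    also have "\<dots> = integral {0..x} f - lam * integral {0..x} v"
      using x by (intro arg_cong2[where f = "\<lambda>u w. u - lam * w"] causal_conv_heaviside_integral
          continuous_on_subset[OF cont_f] continuous_on_subset[OF cont_v]) auto
    finally show ?thesis .
  qed
  have cont_int: "continuous_on {0..t} (\<lambda>x. v x * (integral {0..x} f - lam * integral {0..x} v))"
    by (intro continuous_intros cont_v indefinite_integral_continuous_1 integrable_continuous_real
        continuous_on_subset[OF cont_f]) simp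
  have "0 \<le> (LINT x|lborel. indicator {0..t} x * (ve x * causal_conv (rl_kernel (1 - a)) ve x))"
    using a t by (intro rl_kernel_positive continuous_on_clamp_Icc[OF cont_v, folded ve_def]) auto
  also have "\<dots> = (LINT x|lborel. indicator {0..t} x * (v x * (integral {0..x} f - lam * integral {0..x} v)))"
    by (intro Bochner_Integration.integral_cong refl) (auto simp: resolvent ve_eq split: split_indicator)
  also have "\<dots> = integral {0..t} (\<lambda>x. v x * (integral {0..x} f - lam * integral {0..x} v))"
    by (rule lborel_integral_Icc_eq_integral[OF cont_int])
  finally show ?thesis by (simp add: v_def)
qed

lemma energy_estimate:
  fixes p p' q w :: "real \<Rightarrow> real" and c d lam t :: real
  assumes t: "t \<ge> 0" and lam: "lam > 0" and d: "d \<ge> 0"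
    and cont_p: "continuous_on {0..t} p" and cont_q: "continuous_on {0..t} q"
    and cont_w: "continuous_on {0..t} w"
    and deriv_p: "\<And>x. x \<in> {0<..<t} \<Longrightarrow> (p has_real_derivative p' x) (at x)"
    and deriv_q: "\<And>x. x \<in> {0<..<t} \<Longrightarrow> (q has_real_derivative p x) (at x)"
    and eqn: "\<And>x. x \<in> {0<..<t} \<Longrightarrow> p' x + c * q x = d * integral {0..x} w"
    and q0: "q 0 = 0"
    and pos: "0 \<le> integral {0..t} (\<lambda>x. w x * (q x - lam * integral {0..x} w))"
  shows "(p t)\<^sup>2 + (c - d / lam) * (q t)\<^sup>2 \<le> (p 0)\<^sup>2"
proof -
  define W where "W x = integral {0..x} w" for x
  define Y where "Y x = q x - lam * W x" for x
  define I where "I x = integral {0..x} (\<lambda>s. w s * Y s)" for x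
  define E where "E x = (p x)\<^sup>2 + (c - d / lam) * (q x)\<^sup>2 + d / lam * (Y x)\<^sup>2 + 2 * d * I x" for x
  have cont_W: "continuous_on {0..t} W"
    unfolding W_def by (intro indefinite_integral_continuous_1 integrable_continuous_real cont_w)
  have cont_Y: "continuous_on {0..t} Y"
    unfolding Y_def by (intro continuous_intros cont_q cont_W)
  have cont_wY: "continuous_on {0..t} (\<lambda>s. w s * Y s)"
    by (intro continuous_intros cont_w cont_Y)
  have "continuous_on {0..t} I"
    unfolding I_def by (intro indefinite_integral_continuous_1 integrable_continuous_real cont_wY)
  hence cont_E: "continuous_on {0..t} E"
    unfolding E_def by (intro continuous_intros cont_p cont_q cont_Y)
  have E_const: "(E has_real_derivative 0) (at x)" if x: "x \<in> {0<..<t}" for x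
  proof -
    have "x \<in> {0..t}" using x by auto
    have dW: "(W has_real_derivative w x) (at x)"
      using integral_has_real_derivative[OF cont_w \<open>x \<in> {0..t}\<close>] x
      unfolding W_def by (intro has_real_derivative_at_interior)
    have dI: "(I has_real_derivative w x * Y x) (at x)"
      using integral_has_real_derivative[OF cont_wY \<open>x \<in> {0..t}\<close>] x
      unfolding I_def by (intro has_real_derivative_at_interior)
    have dY: "(Y has_real_derivative p x - lam * w x) (at x)"
      unfolding Y_def[abs_def] using deriv_q[OF x] dW by (auto intro!: derivative_eq_intros)
    have "(E has_real_derivative
        2 * p x * p' x + (c - d / lam) * (2 * q x * p x) + d / lam * (2 * Y x * (p x - lam * w x))
        + 2 * d * (w x * Y x)) (at x)"
      unfolding E_def using deriv_p[OF x] deriv_q[OF x] dY dI lam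
      by (auto intro!: derivative_eq_intros simp: field_simps)
    moreover have "2 * p x * p' x + (c - d / lam) * (2 * q x * p x) + d / lam * (2 * Y x * (p x - lam * w x))
        + 2 * d * (w x * Y x) = 2 * p x * (p' x + c * q x - d * W x)"
      using lam by (simp add: Y_def field_simps)
    ultimately show ?thesis using eqn[OF x] by (simp add: W_def)
  qed
  have "E t = E 0"
  proof (cases "t = 0")
    case False
    thus ?thesis using t E_const cont_E by (intro DERIV_isconst_end) auto
  qed simp
  also have "E 0 = (p 0)\<^sup>2" by (simp add: E_def Y_def W_def I_def q0)
  finally have "E t = (p 0)\<^sup>2" .
  moreover have "d / lam * (Y t)\<^sup>2 \<ge> 0" "2 * d * I t \<ge> 0"
    using lam d pos by (auto simp: I_def Y_def W_def)
  ultimately show ?thesis by (simp add: E_def)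
qed

theorem theorem3p1:
  fixes T \<alpha> c d lam u0 u1 :: real
    and p q p' :: "real \<Rightarrow> real"
  assumes "T > 0" and "0 < \<alpha>" and "\<alpha> < 1"
    and "c > 0" and "d > 0" and "lam > 0"
    and cont_p: "continuous_on {0..T} p"
    and cont_q: "continuous_on {0..T} q"
    and deriv_p: "\<And>t. t \<in> {0<..T} \<Longrightarrow> (p has_real_derivative p' t) (at t within {0..T})"
    and deriv_q: "\<And>t. t \<in> {0<..T} \<Longrightarrow> (q has_real_derivative p t) (at t within {0..T})"
    and eqn: "\<And>t. t \<in> {0<..T} \<Longrightarrow>
       ((\<lambda>s. ml_kernel \<alpha> lam (t - s) * q s) has_integral (p' t + c * q t) / d) {0..t}"
    and init_q: "q 0 = u0" and init_p: "p 0 = u1"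
    and "u0 = 0" and "c - d / lam \<ge> 0"
  shows "\<forall>t \<in> {0..T}. (p t)\<^sup>2 + (c - d / lam) * (q t)\<^sup>2 \<le> u1\<^sup>2"
proof
  fix t assume t: "t \<in> {0..T}"
  have a: "0 < \<alpha>" "\<alpha> < 1" and lam: "lam > 0" and "d > 0" and q0: "q 0 = 0"
    using assms by simp_all
  define pe where "pe x = p (clamp 0 T x)" for x
  define w where "w = causal_conv (ml_causal \<alpha> lam) pe"
  have cont_pe: "continuous_on UNIV pe"
    unfolding pe_def by (rule continuous_on_clamp_Icc[OF cont_p])
  have dp: "(p has_real_derivative p' x) (at x)" and dq: "(q has_real_derivative pe x) (at x)"
    if "x \<in> {0<..<T}" for x
    using deriv_p[of x] deriv_q[of x] that by (auto simp: pe_def intro: has_real_derivative_at_interior)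
  have q_eq: "q x = integral {0..x} pe" if "x \<in> {0..T}" for x
    using fundamental_theorem_of_calculus_real_interior[of 0 x q pe] that
      continuous_on_subset[OF cont_q, of "{0..x}"] dq q0 by auto
  have eqn_w: "p' x + c * q x = d * integral {0..x} w" if x: "x \<in> {0<..T}" for x
  proof -
    have "(p' x + c * q x) / d = integral {0..x} (\<lambda>s. ml_kernel \<alpha> lam (x - s) * q s)"
      using integral_unique[OF eqn[OF x]] by simp
    also have "\<dots> = integral {0..x} w"
      unfolding w_def using x by (intro integral_ml_kernel_antiderivative a lam cont_pe q_eq) auto
    finally show ?thesis using \<open>d > 0\<close> by (simp add: field_simps)
  qed
  have cont_w: "continuous_on {0..t} w"
    unfolding w_def using t
    by (intro continuous_on_causal_conv ml_causal_measurable ml_causal_integrable a lam cont_pe) auto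
  have "integral {0..t} (\<lambda>x. w x * (q x - lam * integral {0..x} w))
      = integral {0..t} (\<lambda>x. w x * (integral {0..x} pe - lam * integral {0..x} w))"
    using t by (intro integral_cong) (simp add: q_eq)
  hence pos: "0 \<le> integral {0..t} (\<lambda>x. w x * (q x - lam * integral {0..x} w))"
    using ml_causal_energy_nonneg[OF a lam cont_pe, of t] t by (simp add: w_def)
  have "(p t)\<^sup>2 + (c - d / lam) * (q t)\<^sup>2 \<le> (p 0)\<^sup>2"
    using t \<open>d > 0\<close> dp dq eqn_w pe_def
    by (intro energy_estimate[where p' = p', OF _ lam _ _ _ cont_w _ _ _ q0 pos]
        continuous_on_subset[OF cont_p] continuous_on_subset[OF cont_q]) auto
  thus "(p t)\<^sup>2 + (c - d / lam) * (q t)\<^sup>2 \<le> u1\<^sup>2" using init_p by simp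
qed

end
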